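(* For $\ell=0,1,\ldots,N$ let $$\mathcal{K}_\ell(x,y)=\frac{\exp\big(\frac{\mu g\ell}{2\hbar}\big(\sum_{n=1}^{N-\ell}y_n-\sum_{m=1}^Nx_m\big)\big)}{\prod_{m=1}^N\prod_{n=1}^{N-\ell}[2\cosh(\mu(x_m-y_n)/2)]^{g/\hbar}},\qquad \mathcal{K}_N(x)=\exp\Big(-\frac{\mu gN}{2\hbar}\sum_{m=1}^Nx_m\Big).$$ Then for every $k\in\{1,\ldots,N\}$, $$:\hat\Sigma_k(L_{\rm nr}+E)(x_1,\ldots,x_N):\ \mathcal{K}_\ell(x,y)=\sum_{j=0}^{\min(k,\ell)}c_{\ell,j}\ :\hat\Sigma_{k-j}(L_{\rm nr}+E)(-y_1,\ldots,-y_{N-\ell}):\ \mathcal{K}_\ell(x,y),$$ where $:\hat\Sigma_m(L_{\rm nr}+E)(-y_1,\ldots,-y_{N-\ell}):\equiv0$ for $m>N-\ell$ and $:\hat\Sigma_0(L_{\rm nr}+E):\equiv1$.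
   Context: Fix $\hbar,\mu,g>0$. For $n$ variables $x=(x_1,\ldots,x_n)$ and momenta $p$, let $L_{\rm nr}(x,p)$ be the $n\times n$ matrix $L_{\rm nr}(x,p)_{jk}=\delta_{jk}p_j+(1-\delta_{jk})\frac{i\mu g}{2\sinh(\mu(x_j-x_k)/2)}$ and $E(x)=\mathrm{diag}(z_1(x),\ldots,z_n(x))$ with $z_j(x)=-\frac{i\mu g}{2}\sum_{k\ne j}\coth(\mu(x_j-x_k)/2)$. Let $\Sigma_k(M)$ denote the $k$-th symmetric function of a matrix $M$ (sum of its principal $k\times k$ minors). The normal-ordered operator $:\hat\Sigma_k(L_{\rm nr}+E)(x):$ is the partial differential operator obtained from the polynomial $\Sigma_k(L_{\rm nr}(x,p)+E(x))$ in $p$ by writing all $x$-dependent coefficients to the left of the monomials in $p$ and substituting $p_m\to-i\hbar\partial_{x_m}$. The operator $:\hat\Sigma_k(L_{\rm nr}+E)(-y_1,\ldots,-y_n):$ is obtained from the one in variables $x$ by the substitution $x=-y$ (coefficients evaluated at $-y$, $\partial_{x_m}$ replaced by $-\partial_{y_m}$). Coefficients: $c_{\ell,j}=(i\mu g/2)^jS_j(1,3,\ldots,2\ell-1)$ for $0\le j\le\ell$ (with $S_j$ the $j$-th elementary symmetric function of the $\ell$ numbers $1,3,\ldots,2\ell-1$, $c_{0,0}=1$). The identity is understood for real $x$, $y$ with pairwise distinct coordinates. *)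

theory Defs
  imports "HOL-Analysis.Analysis" "HOL-Combinatorics.Permutations"
begin

text \<open>Points in R^n are functions nat => real; only coordinates 1..n matter.\<close>

definition Lnr_offdiag :: "real \<Rightarrow> real \<Rightarrow> (nat \<Rightarrow> real) \<Rightarrow> nat \<Rightarrow> nat \<Rightarrow> complex" where
  "Lnr_offdiag mu g x j k =
     \<i> * complex_of_real mu * complex_of_real g / (2 * complex_of_real (sinh (mu * (x j - x k) / 2)))"

definition zE :: "real \<Rightarrow> real \<Rightarrow> nat \<Rightarrow> (nat \<Rightarrow> real) \<Rightarrow> nat \<Rightarrow> complex" where
  "zE mu g n x j =
     - (\<i> * complex_of_real mu * complex_of_real g / 2) *
       (\<Sum>k\<in>{1..n} - {j}. complex_of_real (cosh (mu * (x j - x k) / 2) / sinh (mu * (x j - x k) / 2)))"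

definition partial_at :: "((nat \<Rightarrow> real) \<Rightarrow> complex) \<Rightarrow> nat \<Rightarrow> (nat \<Rightarrow> real) \<Rightarrow> complex" where
  "partial_at f m = (\<lambda>x. vector_derivative (\<lambda>t. f (x(m := t))) (at (x m)))"

fun mpartial :: "((nat \<Rightarrow> real) \<Rightarrow> complex) \<Rightarrow> nat list \<Rightarrow> (nat \<Rightarrow> real) \<Rightarrow> complex" where
  "mpartial f [] = f"
| "mpartial f (m # ms) = partial_at (mpartial f ms) m"

text \<open>Normal-ordered operator :Sigma_k(L_nr + E): in n variables, applied to f at the point x.
  With s = 1 this is the operator in the variables x; with s = -1 it is the operator obtained
  by the substitution x = -y (coefficients at -y, each derivative replaced by its negative).
  Expansion: principal minors over I with |I| = k, Leibniz formula over permutations of I;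
  the diagonal factors (p_j + z_j) for fixed points are expanded, and the monomial
  prod_{j in J} p_j becomes (-i hbar)^|J| times the mixed partial derivative.\<close>
definition Sigma_op :: "real \<Rightarrow> real \<Rightarrow> real \<Rightarrow> nat \<Rightarrow> nat \<Rightarrow> real \<Rightarrow>
    ((nat \<Rightarrow> real) \<Rightarrow> complex) \<Rightarrow> (nat \<Rightarrow> real) \<Rightarrow> complex" where
  "Sigma_op hbar mu g n k s f x =
     (let xs = (\<lambda>m. s * x m) in
      \<Sum>I\<in>{I. I \<subseteq> {1..n} \<and> card I = k}.
        \<Sum>\<sigma>\<in>{\<sigma>. \<sigma> permutes I}.
          of_int (sign \<sigma>) *
          (\<Prod>j\<in>{j\<in>I. \<sigma> j \<noteq> j}. Lnr_offdiag mu g xs j (\<sigma> j)) *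
          (\<Sum>J\<in>Pow {j\<in>I. \<sigma> j = j}.
             (\<Prod>j\<in>{j\<in>I. \<sigma> j = j} - J. zE mu g n xs j) *
             (- \<i> * complex_of_real hbar * complex_of_real s) ^ card J *
             mpartial f (sorted_list_of_set J) x))"

definition coef_c :: "real \<Rightarrow> real \<Rightarrow> nat \<Rightarrow> nat \<Rightarrow> complex" where
  "coef_c mu g l j = (\<i> * complex_of_real mu * complex_of_real g / 2) ^ j *
     of_nat (\<Sum>A\<in>{A. A \<subseteq> {1..l} \<and> card A = j}. \<Prod>a\<in>A. 2 * a - 1)"

definition kernelK :: "real \<Rightarrow> real \<Rightarrow> real \<Rightarrow> nat \<Rightarrow> nat \<Rightarrow> (nat \<Rightarrow> real) \<Rightarrow> (nat \<Rightarrow> real) \<Rightarrow> complex" where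
  "kernelK hbar mu g N l x y = complex_of_real (
     exp (mu * g * real l / (2 * hbar) * ((\<Sum>n=1..N-l. y n) - (\<Sum>m=1..N. x m))) /
     (\<Prod>m=1..N. \<Prod>n=1..N-l. (2 * cosh (mu * (x m - y n) / 2)) powr (g / hbar)))"

end

theory Submission
  imports Defs "Jordan_Normal_Form.Determinant" "HOL-Computational_Algebra.Polynomial"
begin

text \<open>
  The kernel is the exponential of a sum of one-variable functions, so a normal-ordered operator
  acts on it by multiplication: applying \<open>:\<Sigma>\<^sub>k(L\<^sub>n\<^sub>r + E):\<close> gives the kernel times the sum of the principal
  \<open>k\<times>k\<close> minors of a numerical matrix. In the variables \<open>Z = exp(\<mu>x)\<close>, \<open>W = exp(\<mu>y)\<close> this matrix is
  \<open>i\<mu>g/2\<close> times a diagonal conjugate of the rational matrix \<open>lax_matrix\<close>, and on the \<open>y\<close> side one gets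
  the same matrix with \<open>(Z, W)\<close> replaced by \<open>(1/W, 1/Z)\<close>. The theorem therefore reduces to the
  characteristic-polynomial identity
  \<open>det(1 + tL\<^sub>x) = \<Prod>(e < \<ell>). (1 + (2e+1)t) \<cdot> det(1 + tL\<^sub>y)\<close>,
  whose coefficients of \<open>t\<^sup>k\<close> are the claimed identity with \<open>c\<^sub>\<ell>\<^sub>,\<^sub>j\<close>. It is proved by conjugating \<open>L\<^sub>x\<close> with
  the Cauchy-Vandermonde matrix \<open>[1/(Z\<^sub>j + W\<^sub>c) | Z\<^sub>j\<^sup>e]\<close>: the result is block upper triangular, with the
  transposed \<open>L\<^sub>y\<close> (up to diagonal conjugation) and an upper triangular block with diagonal \<open>2e+1\<close>.
\<close>

definition det_on :: "nat set \<Rightarrow> (nat \<Rightarrow> nat \<Rightarrow> 'a::comm_ring_1) \<Rightarrow> 'a" where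
  "det_on S A = (\<Sum>\<sigma>\<in>{\<sigma>. \<sigma> permutes S}. of_int (sign \<sigma>) * (\<Prod>i\<in>S. A i (\<sigma> i)))"

definition sum_principal_minors :: "nat \<Rightarrow> nat \<Rightarrow> (nat \<Rightarrow> nat \<Rightarrow> 'a::comm_ring_1) \<Rightarrow> 'a" where
  "sum_principal_minors n k A = (\<Sum>I\<in>{I. I \<subseteq> {1..n} \<and> card I = k}. det_on I A)"

lemma permutes_fixing_complement_eq:
  assumes "I \<subseteq> S"
  shows "{\<sigma>. \<sigma> permutes S \<and> (\<forall>i\<in>S - I. \<sigma> i = i)} = {\<sigma>. \<sigma> permutes I}"
proof (rule Set.set_eqI, unfold mem_Collect_eq, rule iffI)
  fix \<sigma> assume h: "\<sigma> permutes S \<and> (\<forall>i\<in>S - I. \<sigma> i = i)"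
  show "\<sigma> permutes I" unfolding permutes_def
  proof (intro conjI allI impI)
    fix x assume "x \<notin> I"
    then show "\<sigma> x = x" using h permutes_not_in[of \<sigma> S x] by (cases "x \<in> S") auto
  next
    fix y show "\<exists>!x. \<sigma> x = y" using h unfolding permutes_def by blast
  qed
next
  fix \<sigma> assume h: "\<sigma> permutes I"
  then show "\<sigma> permutes S \<and> (\<forall>i\<in>S - I. \<sigma> i = i)"
    using permutes_subset[OF h assms] permutes_not_in[OF h] by auto
qed

lemma det_on_id_plus:
  fixes A :: "nat \<Rightarrow> nat \<Rightarrow> 'a::comm_ring_1"
  assumes fin: "finite S"
  shows "det_on S (\<lambda>i j. (if i = j then 1 else 0) + t * A i j) = (\<Sum>I\<in>Pow S. t ^ card I * det_on I A)"
proof -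
  have "det_on S (\<lambda>i j. (if i = j then 1 else 0) + t * A i j)
      = (\<Sum>\<sigma>\<in>{\<sigma>. \<sigma> permutes S}. of_int (sign \<sigma>) *
          (\<Sum>I\<in>Pow S. (\<Prod>i\<in>I. t * A i (\<sigma> i)) * (\<Prod>i\<in>S - I. (if i = \<sigma> i then 1 else 0))))"
    unfolding det_on_def
    by (intro sum.cong refl, subst prod_add[OF fin, symmetric]) (simp add: add.commute)
  also have "\<dots> = (\<Sum>\<sigma>\<in>{\<sigma>. \<sigma> permutes S}. \<Sum>I\<in>Pow S.
        (if (\<forall>i\<in>S - I. \<sigma> i = i) then t ^ card I * (of_int (sign \<sigma>) * (\<Prod>i\<in>I. A i (\<sigma> i))) else 0))"
  proof (intro sum.cong refl)
    fix \<sigma> show "of_int (sign \<sigma>) * (\<Sum>I\<in>Pow S. (\<Prod>i\<in>I. t * A i (\<sigma> i)) * (\<Prod>i\<in>S - I. (if i = \<sigma> i then 1 else 0)))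
      = (\<Sum>I\<in>Pow S. (if (\<forall>i\<in>S - I. \<sigma> i = i) then t ^ card I * (of_int (sign \<sigma>) * (\<Prod>i\<in>I. A i (\<sigma> i))) else 0))"
      unfolding sum_distrib_left
    proof (intro sum.cong refl)
      fix I assume I: "I \<in> Pow S"
      have fI: "finite I" using I fin finite_subset by auto
      have "(\<Prod>i\<in>S - I. (if i = \<sigma> i then 1 else 0::'a)) = (if (\<forall>i\<in>S - I. \<sigma> i = i) then 1 else 0)"
      proof (cases "\<forall>i\<in>S - I. \<sigma> i = i")
        case True then show ?thesis by (simp add: prod.neutral)
      next
        case False
        then obtain i where "i \<in> S - I" "\<sigma> i \<noteq> i" by blast
        then have "(\<Prod>i\<in>S - I. (if i = \<sigma> i then 1 else 0::'a)) = 0"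
          using fin by (intro prod_zero) (auto intro!: bexI[of _ i])
        then show ?thesis using False by simp
      qed
      then show "of_int (sign \<sigma>) * ((\<Prod>i\<in>I. t * A i (\<sigma> i)) * (\<Prod>i\<in>S - I. (if i = \<sigma> i then 1 else 0)))
          = (if (\<forall>i\<in>S - I. \<sigma> i = i) then t ^ card I * (of_int (sign \<sigma>) * (\<Prod>i\<in>I. A i (\<sigma> i))) else 0)"
        using fI by (simp add: prod.distrib)
    qed
  qed
  also have "\<dots> = (\<Sum>I\<in>Pow S. \<Sum>\<sigma>\<in>{\<sigma>. \<sigma> permutes S}.
        (if (\<forall>i\<in>S - I. \<sigma> i = i) then t ^ card I * (of_int (sign \<sigma>) * (\<Prod>i\<in>I. A i (\<sigma> i))) else 0))"
    by (rule sum.swap)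
  also have "\<dots> = (\<Sum>I\<in>Pow S. t ^ card I * det_on I A)"
  proof (intro sum.cong refl)
    fix I assume I: "I \<in> Pow S"
    have "(\<Sum>\<sigma>\<in>{\<sigma>. \<sigma> permutes S}.
        (if (\<forall>i\<in>S - I. \<sigma> i = i) then t ^ card I * (of_int (sign \<sigma>) * (\<Prod>i\<in>I. A i (\<sigma> i))) else 0))
        = (\<Sum>\<sigma>\<in>{\<sigma>\<in>{\<sigma>. \<sigma> permutes S}. (\<forall>i\<in>S - I. \<sigma> i = i)}. t ^ card I * (of_int (sign \<sigma>) * (\<Prod>i\<in>I. A i (\<sigma> i))))"
      by (rule sum.inter_filter[symmetric]) (simp add: finite_permutations fin)
    also have "{\<sigma>\<in>{\<sigma>. \<sigma> permutes S}. (\<forall>i\<in>S - I. \<sigma> i = i)} = {\<sigma>. \<sigma> permutes I}"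
      using permutes_fixing_complement_eq[of I S] I by auto
    finally show "(\<Sum>\<sigma>\<in>{\<sigma>. \<sigma> permutes S}.
        (if (\<forall>i\<in>S - I. \<sigma> i = i) then t ^ card I * (of_int (sign \<sigma>) * (\<Prod>i\<in>I. A i (\<sigma> i))) else 0))
        = t ^ card I * det_on I A"
      unfolding det_on_def sum_distrib_left .
  qed
  finally show ?thesis .
qed

lemma det_on_scale:
  fixes A :: "nat \<Rightarrow> nat \<Rightarrow> 'a::comm_ring_1"
  shows "det_on S (\<lambda>i j. c * A i j) = c ^ card S * det_on S A"
proof (cases "finite S")
  case True
  then show ?thesis unfolding det_on_def sum_distrib_left
    by (intro sum.cong refl) (simp add: prod.distrib)
next
  case False
  then show ?thesis unfolding det_on_def by simp
qed

lemma det_on_of_real: "det_on I (\<lambda>i j. of_real (R i j)) = of_real (det_on I R)"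
  unfolding det_on_def by (simp add: of_real_sum of_real_mult of_real_prod)

lemma det_on_diagonal_conj:
  fixes A :: "nat \<Rightarrow> nat \<Rightarrow> 'a::field"
  assumes d: "\<And>i. i \<in> S \<Longrightarrow> d i \<noteq> 0"
  shows "det_on S (\<lambda>i j. d i * A i j / d j) = det_on S A"
  unfolding det_on_def
proof (intro sum.cong refl)
  fix \<sigma> assume "\<sigma> \<in> {\<sigma>. \<sigma> permutes S}"
  then have p: "\<sigma> permutes S" by simp
  have e: "(\<Prod>i\<in>S. d (\<sigma> i)) = (\<Prod>i\<in>S. d i)"
    using prod.permute[OF p, of d] by (simp add: comp_def)
  have nz: "(\<Prod>i\<in>S. d i) \<noteq> 0" using d by (cases "finite S") (auto simp: prod_zero_iff)
  have "(\<Prod>i\<in>S. d i * A i (\<sigma> i) / d (\<sigma> i))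
      = (\<Prod>i\<in>S. d i) * (\<Prod>i\<in>S. A i (\<sigma> i)) / (\<Prod>i\<in>S. d (\<sigma> i))"
    by (simp add: prod.distrib prod_dividef)
  also have "\<dots> = (\<Prod>i\<in>S. A i (\<sigma> i))" using e nz by simp
  finally show "of_int (sign \<sigma>) * (\<Prod>i\<in>S. d i * A i (\<sigma> i) / d (\<sigma> i))
      = of_int (sign \<sigma>) * (\<Prod>i\<in>S. A i (\<sigma> i))" by simp
qed

lemma det_on_reindex:
  fixes A :: "nat \<Rightarrow> nat \<Rightarrow> 'a::comm_ring_1"
  assumes f: "bij_betw f S T" and fin: "finite S"
  shows "det_on S (\<lambda>i j. A (f i) (f j)) = det_on T A"
proof -
  let ?m = "map_permutation S f"
  have inj: "inj_on f S" using f bij_betw_imp_inj_on by blast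
  have fS: "f ` S = T" using f bij_betw_imp_surj_on by blast
  have f': "bij_betw (inv_into S f) T S" using bij_betw_inv_into[OF f] .
  have bij: "bij_betw ?m {\<sigma>. \<sigma> permutes S} {\<tau>. \<tau> permutes T}"
  proof (rule bij_betw_byWitness[where f' = "map_permutation T (inv_into S f)"])
    show "\<forall>\<sigma>\<in>{\<sigma>. \<sigma> permutes S}. map_permutation T (inv_into S f) (?m \<sigma>) = \<sigma>"
      using map_permutation_compose_inv[OF f] inv_into_f_f[OF inj] by auto
    show "\<forall>\<tau>\<in>{\<tau>. \<tau> permutes T}. ?m (map_permutation T (inv_into S f) \<tau>) = \<tau>"
      using map_permutation_compose_inv[OF f', of _ f] f_inv_into_f[of _ f S] fS by auto
    show "?m ` {\<sigma>. \<sigma> permutes S} \<subseteq> {\<tau>. \<tau> permutes T}"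
      using map_permutation_permutes[OF f] by auto
    show "map_permutation T (inv_into S f) ` {\<tau>. \<tau> permutes T} \<subseteq> {\<sigma>. \<sigma> permutes S}"
      using map_permutation_permutes[OF f'] by auto
  qed
  have "det_on T A = (\<Sum>\<sigma>\<in>{\<sigma>. \<sigma> permutes S}. of_int (sign (?m \<sigma>)) * (\<Prod>j\<in>T. A j (?m \<sigma> j)))"
    unfolding det_on_def by (rule sum.reindex_bij_betw[OF bij, symmetric])
  also have "\<dots> = det_on S (\<lambda>i j. A (f i) (f j))"
    unfolding det_on_def
  proof (intro sum.cong refl)
    fix \<sigma> assume "\<sigma> \<in> {\<sigma>. \<sigma> permutes S}"
    then have p: "\<sigma> permutes S" by simp
    have "(\<Prod>j\<in>T. A j (?m \<sigma> j)) = (\<Prod>i\<in>S. A (f i) (?m \<sigma> (f i)))"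
      using prod.reindex[OF inj, of "\<lambda>j. A j (?m \<sigma> j)"] fS by simp
    also have "\<dots> = (\<Prod>i\<in>S. A (f i) (f (\<sigma> i)))"
      by (intro prod.cong refl) (simp add: map_permutation_apply[OF inj])
    finally show "of_int (sign (?m \<sigma>)) * (\<Prod>j\<in>T. A j (?m \<sigma> j))
        = of_int (sign \<sigma>) * (\<Prod>i\<in>S. A (f i) (f (\<sigma> i)))"
      using sign_map_permutation[OF inj p fin] by simp
  qed
  finally show ?thesis by simp
qed

lemma det_mat_eq_det_on:
  "Determinant.det (mat n n (\<lambda>(i,j). A i j)) = det_on {0..<n} A"
  unfolding det_on_def by (subst det_def'[of _ n]) (auto intro!: sum.cong prod.cong simp: permutes_def)

lemma det_id_plus_eq_sum_principal_minors:
  fixes A :: "nat \<Rightarrow> nat \<Rightarrow> 'a::comm_ring_1"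
  shows "Determinant.det (mat n n (\<lambda>(i,j). (if i = j then 1 else 0) + t * A (Suc i) (Suc j)))
     = (\<Sum>k\<le>n. t ^ k * sum_principal_minors n k A)"
proof -
  have "Determinant.det (mat n n (\<lambda>(i,j). (if i = j then 1 else 0) + t * A (Suc i) (Suc j)))
      = (\<Sum>I\<in>Pow {0..<n}. t ^ card I * det_on I (\<lambda>i j. A (Suc i) (Suc j)))"
    by (simp add: det_mat_eq_det_on det_on_id_plus)
  also have "\<dots> = (\<Sum>I\<in>Pow {0..<n}. t ^ card (Suc ` I) * det_on (Suc ` I) A)"
  proof (intro sum.cong refl)
    fix I assume "I \<in> Pow {0..<n}"
    then have "finite I" by (auto intro: finite_subset)
    then show "t ^ card I * det_on I (\<lambda>i j. A (Suc i) (Suc j)) = t ^ card (Suc ` I) * det_on (Suc ` I) A"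
      using det_on_reindex[of Suc I "Suc ` I" A] by (simp add: card_image bij_betw_imageI)
  qed
  also have "\<dots> = (\<Sum>J\<in>Pow {1..n}. t ^ card J * det_on J A)"
  proof -
    have inj: "inj_on (image Suc) (Pow {0..<n})" by (simp add: inj_on_def inj_image_eq_iff)
    have "image Suc ` Pow {0..<n} = Pow {1..n}"
    proof (rule Set.set_eqI, rule iffI)
      fix J assume "J \<in> Pow {1..n}"
      then have "J = Suc ` ((\<lambda>j. j - 1) ` J)" "(\<lambda>j. j - 1) ` J \<in> Pow {0..<n}"
        by (force simp: image_iff)+
      then show "J \<in> image Suc ` Pow {0..<n}" by blast
    qed auto
    then show ?thesis using sum.reindex[OF inj, of "\<lambda>J. t ^ card J * det_on J A"] by simp
  qed
  also have "\<dots> = (\<Sum>k\<le>n. \<Sum>J\<in>{J\<in>Pow {1..n}. card J = k}. t ^ card J * det_on J A)"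
    by (rule sum.group[symmetric]) (auto simp: card_mono[of "{1..n}", simplified] intro: card_mono)
  also have "\<dots> = (\<Sum>k\<le>n. t ^ k * sum_principal_minors n k A)"
    unfolding sum_principal_minors_def sum_distrib_left by (intro sum.cong refl) auto
  finally show ?thesis .
qed

lemma sum_principal_minors_eq_0:
  assumes "n < k"
  shows "sum_principal_minors n k A = 0"
proof -
  have "card I \<le> n" if "I \<subseteq> {1..n}" for I :: "nat set"
    using card_mono[OF _ that] by simp
  then have no_minors: "{I. I \<subseteq> {1..n} \<and> card I = k} = {}" using assms by (auto simp: not_le[symmetric])
  show ?thesis unfolding sum_principal_minors_def no_minors by simp
qed

lemma sum_principal_minors_scale_of_real:
  fixes a :: complex
  shows "sum_principal_minors n k (\<lambda>i j. a * of_real (R i j)) = a ^ k * of_real (sum_principal_minors n k R)"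
proof -
  have "sum_principal_minors n k (\<lambda>i j. a * of_real (R i j))
      = (\<Sum>I\<in>{I. I \<subseteq> {1..n} \<and> card I = k}. a ^ k * of_real (det_on I R))"
    unfolding sum_principal_minors_def by (intro sum.cong refl) (simp add: det_on_scale det_on_of_real)
  then show ?thesis unfolding sum_principal_minors_def by (simp add: sum_distrib_left of_real_sum)
qed

lemma sum_principal_minors_diagonal_conj:
  fixes A :: "nat \<Rightarrow> nat \<Rightarrow> 'a::field"
  assumes "\<And>i. d i \<noteq> 0"
  shows "sum_principal_minors n k (\<lambda>i j. d i * A i j / d j) = sum_principal_minors n k A"
  unfolding sum_principal_minors_def by (intro sum.cong refl det_on_diagonal_conj assms)

lemma coeff_sum_monom:
  fixes f :: "nat \<Rightarrow> 'a::comm_ring_1"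
  assumes "finite E"
  shows "coeff (\<Sum>e\<in>E. monom (f e) e) n = (if n \<in> E then f n else 0)"
proof -
  have "coeff (\<Sum>e\<in>E. monom (f e) e) n = (\<Sum>e\<in>E. if e = n then f e else 0)"
    unfolding coeff_sum coeff_monom by (intro sum.cong refl)
  also have "\<dots> = (if n \<in> E then f n else 0)" using assms by (simp add: sum.delta')
  finally show ?thesis .
qed

lemma poly_eq_0_if_pos_roots:
  fixes P :: "real poly"
  assumes "\<And>z. z > 0 \<Longrightarrow> poly P z = 0"
  shows "P = 0"
proof (rule ccontr)
  assume "P \<noteq> 0"
  then have "finite {x. poly P x = 0}" by (rule poly_roots_finite)
  moreover have "{0::real<..} \<subseteq> {x. poly P x = 0}" using assms by auto
  ultimately have "finite {0::real<..}" by (rule finite_subset[rotated])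
  then show False using infinite_Ioi by blast
qed

lemma poly_eq_0_if_roots_exceed_degree:
  fixes R :: "'a::idom poly"
  assumes inj: "inj_on Z {..<N}" and deg: "degree R < N" and roots: "\<And>j. j < N \<Longrightarrow> poly R (Z j) = 0"
  shows "R = 0"
proof (rule ccontr)
  assume "R \<noteq> 0"
  then have fin: "finite {x. poly R x = 0}" and bound: "card {x. poly R x = 0} \<le> degree R"
    by (simp_all add: poly_roots_finite card_poly_roots_bound)
  have "Z ` {..<N} \<subseteq> {x. poly R x = 0}" using roots by auto
  then have "card (Z ` {..<N}) \<le> card {x. poly R x = 0}" using fin by (rule card_mono[rotated])
  moreover have "card (Z ` {..<N}) = N" using inj by (simp add: card_image)
  ultimately show False using bound deg by linarith
qed

lemma coeff_eq_of_polynomial_product: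
  fixes a b c :: "nat \<Rightarrow> real"
  assumes prod: "\<And>t. (\<Sum>k\<le>n. t ^ k * a k) = (\<Sum>i\<le>l. t ^ i * b i) * (\<Sum>m\<le>M. t ^ m * c m)"
    and a: "\<And>k. n < k \<Longrightarrow> a k = 0" and c: "\<And>m. M < m \<Longrightarrow> c m = 0" and "M + l \<le> n"
  shows "a k = (\<Sum>j=0..min k l. b j * c (k - j))"
proof (cases "k \<le> n")
  case True
  define pa where "pa = (\<Sum>k\<le>n. monom (a k) k)"
  define pb where "pb = (\<Sum>i\<le>l. monom (b i) i)"
  define pc where "pc = (\<Sum>m\<le>M. monom (c m) m)"
  have "poly pa = poly (pb * pc)"
    unfolding pa_def pb_def pc_def poly_mult using prod by (intro ext) (simp add: poly_sum poly_monom mult.commute)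
  then have pe: "pa = pb * pc" by (simp add: poly_eq_poly_eq_iff)
  have cc: "coeff pc m = c m" for m
    unfolding pc_def coeff_sum_monom[OF finite_atMost] atMost_iff using c by auto
  have "a k = coeff pa k" unfolding pa_def coeff_sum_monom[OF finite_atMost] atMost_iff using True by simp
  also have "\<dots> = (\<Sum>i\<le>k. coeff pb i * coeff pc (k - i))" unfolding pe coeff_mult ..
  also have "\<dots> = (\<Sum>i\<le>k. (if i \<le> l then b i else 0) * c (k - i))"
    unfolding pb_def coeff_sum_monom[OF finite_atMost] atMost_iff cc ..
  also have "\<dots> = (\<Sum>i\<in>{0..min k l}. b i * c (k - i))"
    by (rule sum.mono_neutral_cong_right) auto
  finally show ?thesis .
next
  case False
  then have "M < k - j" if "j \<in> {0..min k l}" for j using that \<open>M + l \<le> n\<close> by auto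
  then show ?thesis using False a c by simp
qed

lemma cauchy_power_identity:
  fixes x z :: real
  assumes "x \<noteq> z"
  shows "2 * z / (x - z) * z ^ e - (x + z) / (x - z) * x ^ e = - (x ^ e) - 2 * (\<Sum>i<e. x ^ (e - Suc i) * z ^ Suc i)"
proof -
  define S where "S = (\<Sum>i<e. x ^ (e - Suc i) * z ^ i)"
  have d: "z ^ e - x ^ e = (z - x) * S" unfolding S_def by (rule power_diff_sumr2)
  have "2 * z / (x - z) * z ^ e - (x + z) / (x - z) * x ^ e = - (x ^ e) + 2 * z * (z ^ e - x ^ e) / (x - z)"
    using assms by (simp add: divide_simps) (simp add: algebra_simps)
  also have "2 * z * (z ^ e - x ^ e) / (x - z) = - 2 * (z * S)"
    unfolding d using assms by (simp add: divide_simps) (simp add: algebra_simps)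
  also have "z * S = (\<Sum>i<e. x ^ (e - Suc i) * z ^ Suc i)"
    unfolding S_def sum_distrib_left by (intro sum.cong refl) (simp only: power_Suc mult.left_commute)
  finally show ?thesis by simp
qed

lemma cauchy_quotient_power_identity:
  fixes x w :: real
  assumes "x + w \<noteq> 0"
  shows "(x - w) / (x + w) * x ^ e
    = x ^ e - 2 * (\<Sum>i<e. w * (- w) ^ (e - Suc i) * x ^ i) - 2 * w * (- w) ^ e / (x + w)"
proof -
  define S where "S = (\<Sum>i<e. (- w) ^ (e - Suc i) * x ^ i)"
  have "x ^ e - (- w) ^ e = (x - (- w)) * S" unfolding S_def by (rule power_diff_sumr2)
  then have xe: "x ^ e = (x + w) * S + (- w) ^ e" by simp
  have "(x - w) / (x + w) * x ^ e = x ^ e - 2 * (w * S) - 2 * w * (- w) ^ e / (x + w)"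
    unfolding xe using assms by (simp add: divide_simps) (simp add: algebra_simps)
  also have "w * S = (\<Sum>i<e. w * (- w) ^ (e - Suc i) * x ^ i)"
    unfolding S_def sum_distrib_left by (simp only: mult.assoc)
  finally show ?thesis .
qed

lemma sum_lessThan_split:
  fixes f :: "nat \<Rightarrow> 'a::comm_monoid_add"
  assumes "M \<le> N"
  shows "(\<Sum>c<N. f c) = (\<Sum>c<M. f c) + (\<Sum>e<N - M. f (M + e))"
proof -
  have eq: "{..<N} = {..<M} \<union> {M..<N}" using assms by auto
  have "(\<Sum>c<N. f c) = sum f ({..<M} \<union> {M..<N})" by (simp only: eq)
  also have "\<dots> = (\<Sum>c<M. f c) + (\<Sum>c\<in>{M..<N}. f c)"
    by (rule sum.union_disjoint) auto
  also have "(\<Sum>c\<in>{M..<N}. f c) = (\<Sum>e<N - M. f (M + e))"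
  proof -
    have "(\<lambda>e. M + e) ` {..<N - M} = {M..<N}"
    proof (rule Set.set_eqI, rule iffI)
      fix c assume "c \<in> {M..<N}" then show "c \<in> (\<lambda>e. M + e) ` {..<N - M}"
        by (intro image_eqI[of _ _ "c - M"]) auto
    qed auto
    moreover have "inj_on (\<lambda>e. M + e) {..<N - M}" by (simp add: inj_on_def)
    ultimately show ?thesis using sum.reindex[of "\<lambda>e. M + e" "{..<N - M}" f] by simp
  qed
  finally show ?thesis .
qed

lemma index_mat_mult_mat_lessThan:
  fixes f g :: "nat \<times> nat \<Rightarrow> 'a::comm_ring_1"
  assumes "i < N" "j < N"
  shows "(mat N N f * mat N N g) $$ (i, j) = (\<Sum>k<N. f (i, k) * g (k, j))"
  using assms by (simp add: scalar_prod_def lessThan_atLeast0)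

text \<open>The matrix \<open>L\<^sub>n\<^sub>r + E\<close> acting on the kernel, in the exponential variables and stripped of the
  factor \<open>i\<mu>g/2\<close> and of a diagonal conjugation (see \<open>Sigma_op_exp_kernel_phase\<close>).\<close>

definition lax_matrix :: "nat set \<Rightarrow> nat set \<Rightarrow> real \<Rightarrow> (nat \<Rightarrow> real) \<Rightarrow> (nat \<Rightarrow> real) \<Rightarrow> nat \<Rightarrow> nat \<Rightarrow> real" where
  "lax_matrix I Q c Z W i j = (if i = j then - (\<Sum>k\<in>I - {i}. (Z i + Z k) / (Z i - Z k)) + c
       + (\<Sum>q\<in>Q. (Z i - W q) / (Z i + W q)) else 2 * Z j / (Z i - Z j))"

definition cv_matrix :: "nat \<Rightarrow> (nat \<Rightarrow> real) \<Rightarrow> (nat \<Rightarrow> real) \<Rightarrow> nat \<Rightarrow> nat \<Rightarrow> real" where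
  "cv_matrix M Z W j c = (if c < M then 1 / (Z j + W c) else Z j ^ (c - M))"

text \<open>Conjugating \<open>lax_matrix\<close> by \<open>cv_matrix\<close> gives \<open>1 + cv_blocks\<close> (\<open>lax_intertwines_cv\<close>); the lower left
  block vanishes and \<open>cv_block22\<close> is upper triangular with diagonal \<open>2e\<close>.\<close>

definition cv_block11 :: "nat \<Rightarrow> nat \<Rightarrow> (nat \<Rightarrow> real) \<Rightarrow> (nat \<Rightarrow> real) \<Rightarrow> nat \<Rightarrow> nat \<Rightarrow> real" where
  "cv_block11 N M Z W m n = (if m = n then -2 + (\<Sum>k<N. 2 * Z k / (Z k + W n))
      + (\<Sum>m'\<in>{..<M} - {n}. 2 * W m' / (W n - W m')) else -2 * W m / (W n - W m))"

definition cv_block12 :: "(nat \<Rightarrow> real) \<Rightarrow> nat \<Rightarrow> nat \<Rightarrow> real" where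
  "cv_block12 W q e = -2 * W q * (- W q) ^ e"

definition cv_block22 :: "nat \<Rightarrow> nat \<Rightarrow> (nat \<Rightarrow> real) \<Rightarrow> (nat \<Rightarrow> real) \<Rightarrow> nat \<Rightarrow> nat \<Rightarrow> real" where
  "cv_block22 N M Z W a e = (if a = e then 2 * real e else if a < e then
      -2 * (\<Sum>k<N. Z k ^ (e - a)) - 2 * (\<Sum>q<M. W q * (- W q) ^ (e - Suc a)) else 0)"

definition cv_blocks :: "nat \<Rightarrow> nat \<Rightarrow> (nat \<Rightarrow> real) \<Rightarrow> (nat \<Rightarrow> real) \<Rightarrow> nat \<Rightarrow> nat \<Rightarrow> real" where
  "cv_blocks N M Z W a b = (if a < M then (if b < M then cv_block11 N M Z W a b else cv_block12 W a (b - M))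
      else (if b < M then 0 else cv_block22 N M Z W (a - M) (b - M)))"

context
  fixes N M :: nat and Z W :: "nat \<Rightarrow> real"
  assumes Zpos: "\<And>i. i < N \<Longrightarrow> Z i > 0" and Zinj: "inj_on Z {..<N}"
    and Wpos: "\<And>i. i < M \<Longrightarrow> W i > 0" and Winj: "inj_on W {..<M}"
    and MN: "M \<le> N"
begin

lemma lax_row_times_cauchy:
  assumes j: "j < N" and w0: "w > 0"
  shows "(\<Sum>k<N. lax_matrix {..<N} {..<M} (real (N - M)) Z W j k * (1 / (Z k + w)))
     = (\<Sum>k\<in>{..<N} - {j}. 2 * Z k / ((Z k + w) * (Z j + w)) - 1 / (Z j + w)) + real (N - M) / (Z j + w)
       + (\<Sum>q<M. (Z j - W q) / ((Z j + W q) * (Z j + w)))"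
proof -
  define s where "s = Z j"
  define K where "K = {..<N} - {j}"
  have "s > 0" using Zpos j unfolding s_def by simp
  then have sw: "s + w \<noteq> 0" using w0 by simp
  have Kne: "\<And>k. k \<in> K \<Longrightarrow> s - Z k \<noteq> 0"
    using Zinj j unfolding K_def s_def inj_on_def by force
  have Kpos: "\<And>k. k \<in> K \<Longrightarrow> Z k > 0" using Zpos unfolding K_def by auto
  have "(\<Sum>k<N. lax_matrix {..<N} {..<M} (real (N - M)) Z W j k * (1 / (Z k + w)))
     = lax_matrix {..<N} {..<M} (real (N - M)) Z W j j * (1 / (s + w)) + (\<Sum>k\<in>K. lax_matrix {..<N} {..<M} (real (N - M)) Z W j k * (1 / (Z k + w)))"
    unfolding K_def s_def using j by (subst sum.remove[of _ j]) auto
  also have "\<dots> = (- (\<Sum>k\<in>K. (s + Z k) / (s - Z k)) + real (N - M) + (\<Sum>q<M. (s - W q) / (s + W q))) * (1 / (s + w))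
      + (\<Sum>k\<in>K. 2 * Z k / (s - Z k) * (1 / (Z k + w)))"
    unfolding lax_matrix_def K_def s_def by (intro arg_cong2[where f="(+)"] sum.cong) auto
  also have "\<dots> = (\<Sum>k\<in>K. 2 * Z k / (s - Z k) * (1 / (Z k + w)) - (s + Z k) / (s - Z k) / (s + w)) + real (N - M) / (s + w)
     + (\<Sum>q<M. (s - W q) / ((s + W q) * (s + w)))"
  proof -
    have e1: "(- (\<Sum>k\<in>K. (s + Z k) / (s - Z k)) + real (N - M) + (\<Sum>q<M. (s - W q) / (s + W q))) * (1 / (s + w))
        = - ((\<Sum>k\<in>K. (s + Z k) / (s - Z k)) / (s + w)) + real (N - M) / (s + w) + (\<Sum>q<M. (s - W q) / (s + W q)) / (s + w)"
      by (simp add: ring_distribs divide_inverse)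
    show ?thesis unfolding e1 sum_divide_distrib divide_divide_eq_left sum_subtractf by simp
  qed
  also have "(\<Sum>k\<in>K. 2 * Z k / (s - Z k) * (1 / (Z k + w)) - (s + Z k) / (s - Z k) / (s + w))
      = (\<Sum>k\<in>K. 2 * Z k / ((Z k + w) * (s + w)) - 1 / (s + w))"
  proof (intro sum.cong refl)
    fix k assume k: "k \<in> K"
    have a: "s - Z k \<noteq> 0" using Kne k by auto
    have b: "Z k + w \<noteq> 0" using Kpos[OF k] w0 by auto
    show "2 * Z k / (s - Z k) * (1 / (Z k + w)) - (s + Z k) / (s - Z k) / (s + w)
        = 2 * Z k / ((Z k + w) * (s + w)) - 1 / (s + w)"
      using a b sw by (simp add: divide_simps) (simp add: algebra_simps)
  qed
  finally show ?thesis unfolding s_def K_def .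
qed

lemma lax_cauchy_column:
  assumes j: "j < N" and n: "n < M"
  shows "(\<Sum>k<N. lax_matrix {..<N} {..<M} (real (N - M)) Z W j k * (1 / (Z k + W n)))
       = 1 / (Z j + W n) + (\<Sum>m<M. (1 / (Z j + W m)) * cv_block11 N M Z W m n)"
proof -
  define s where "s = Z j"
  define w where "w = W n"
  define K where "K = {..<N} - {j}"
  define Q where "Q = {..<M} - {n}"
  have s0: "s > 0" using Zpos j s_def by auto
  have w0: "w > 0" using Wpos n w_def by auto
  have sw: "s + w \<noteq> 0" using s0 w0 by auto
  have Qne: "\<And>q. q \<in> Q \<Longrightarrow> w - W q \<noteq> 0"
    using Winj n unfolding Q_def w_def inj_on_def by force
  have Qpos: "\<And>q. q \<in> Q \<Longrightarrow> W q > 0" using Wpos unfolding Q_def by auto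
  have cK: "card K = N - 1" using j unfolding K_def by simp
  have cQ: "card Q = M - 1" using n unfolding Q_def by simp
  have LHS: "(\<Sum>k<N. lax_matrix {..<N} {..<M} (real (N - M)) Z W j k * (1 / (Z k + W n)))
     = (\<Sum>k\<in>K. 2 * Z k / ((Z k + w) * (s + w)) - 1 / (s + w)) + real (N - M) / (s + w)
       + (\<Sum>q<M. (s - W q) / ((s + W q) * (s + w)))"
    unfolding s_def w_def K_def by (rule lax_row_times_cauchy[OF j Wpos[OF n]])
  have L2: "(\<Sum>q<M. (s - W q) / ((s + W q) * (s + w)))
      = (s - w) / ((s + w) * (s + w)) + (\<Sum>q\<in>Q. 1 / (s + w) - 2 * W q / ((s + W q) * (s + w)))"
  proof -
    have "(\<Sum>q<M. (s - W q) / ((s + W q) * (s + w))) = (s - w) / ((s + w) * (s + w)) + (\<Sum>q\<in>Q. (s - W q) / ((s + W q) * (s + w)))"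
      unfolding Q_def w_def using n by (subst sum.remove[of _ n]) auto
    also have "(\<Sum>q\<in>Q. (s - W q) / ((s + W q) * (s + w))) = (\<Sum>q\<in>Q. 1 / (s + w) - 2 * W q / ((s + W q) * (s + w)))"
    proof (intro sum.cong refl)
      fix q assume q: "q \<in> Q"
      have "s + W q \<noteq> 0" using Qpos[OF q] s0 by auto
      then show "(s - W q) / ((s + W q) * (s + w)) = 1 / (s + w) - 2 * W q / ((s + W q) * (s + w))"
        using sw by (simp add: divide_simps) (simp add: algebra_simps)?
    qed
    finally show ?thesis .
  qed
  have RHS: "1 / (Z j + W n) + (\<Sum>m<M. (1 / (Z j + W m)) * cv_block11 N M Z W m n)
     = 1 / (s + w) + (-2 + 2 * s / (s + w) + (\<Sum>k\<in>K. 2 * Z k / (Z k + w)) + (\<Sum>m\<in>Q. 2 * W m / (w - W m))) / (s + w)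
       + (\<Sum>m\<in>Q. (1 / (s + W m)) * (-2 * W m / (w - W m)))"
  proof -
    have "(\<Sum>m<M. (1 / (Z j + W m)) * cv_block11 N M Z W m n) = (1 / (s + w)) * cv_block11 N M Z W n n + (\<Sum>m\<in>Q. (1 / (s + W m)) * cv_block11 N M Z W m n)"
      unfolding Q_def s_def w_def using n by (subst sum.remove[of _ n]) auto
    also have "cv_block11 N M Z W n n = -2 + 2 * s / (s + w) + (\<Sum>k\<in>K. 2 * Z k / (Z k + w)) + (\<Sum>m\<in>Q. 2 * W m / (w - W m))"
      unfolding cv_block11_def K_def Q_def s_def w_def using j by (simp add: sum.remove[of "{..<N}" j])
    also have "(\<Sum>m\<in>Q. (1 / (s + W m)) * cv_block11 N M Z W m n) = (\<Sum>m\<in>Q. (1 / (s + W m)) * (-2 * W m / (w - W m)))"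
      unfolding cv_block11_def Q_def w_def by (intro sum.cong) auto
    finally show ?thesis unfolding s_def w_def by (simp add: field_simps)
  qed
  have Qterm: "(\<Sum>m\<in>Q. 2 * W m / (w - W m)) / (s + w) + (\<Sum>m\<in>Q. (1 / (s + W m)) * (-2 * W m / (w - W m)))
       = - (\<Sum>q\<in>Q. 2 * W q / ((s + W q) * (s + w)))"
  proof -
    have "(\<Sum>m\<in>Q. 2 * W m / (w - W m)) / (s + w) + (\<Sum>m\<in>Q. (1 / (s + W m)) * (-2 * W m / (w - W m)))
        = (\<Sum>m\<in>Q. 2 * W m / (w - W m) / (s + w) + (1 / (s + W m)) * (-2 * W m / (w - W m)))"
      by (simp only: sum_divide_distrib sum.distrib)
    also have "\<dots> = (\<Sum>q\<in>Q. - (2 * W q / ((s + W q) * (s + w))))"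
    proof (intro sum.cong refl)
      fix q assume q: "q \<in> Q"
      have "s + W q \<noteq> 0" using Qpos[OF q] s0 by auto
      then show "2 * W q / (w - W q) / (s + w) + (1 / (s + W q)) * (-2 * W q / (w - W q)) = - (2 * W q / ((s + W q) * (s + w)))"
        using sw Qne[OF q] by (simp add: divide_simps) (simp add: algebra_simps)
    qed
    finally show ?thesis by (simp add: sum_negf)
  qed
  have Kterm: "(\<Sum>k\<in>K. 2 * Z k / ((Z k + w) * (s + w)) - 1 / (s + w))
      = (\<Sum>k\<in>K. 2 * Z k / (Z k + w)) / (s + w) - real (N - 1) / (s + w)"
    using cK by (simp add: sum_subtractf sum_divide_distrib)
  have Qc: "(\<Sum>q\<in>Q. 1 / (s + w) - 2 * W q / ((s + W q) * (s + w)))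
      = real (M - 1) / (s + w) - (\<Sum>q\<in>Q. 2 * W q / ((s + W q) * (s + w)))"
    using cQ by (simp add: sum_subtractf)
  have combine: "(A / (s + w) - a / (s + w)) + b / (s + w) + ((s - w) / ((s + w) * (s + w)) + (c / (s + w) - B))
      = 1 / (s + w) + (- 2 + 2 * s / (s + w) + A + Cq) / (s + w) + Dq"
    if abc: "- a + b + c = 0" and D: "Cq / (s + w) + Dq = - B" for A B Cq Dq a b c :: real
  proof -
    have Dq: "Dq = - B - Cq / (s + w)" using D by simp
    have c: "c = a - b" using abc by simp
    show ?thesis unfolding Dq c using sw by (simp add: divide_simps) (simp add: algebra_simps)
  qed
  have "- real (N - 1) + real (N - M) + real (M - 1) = 0" using MN j n by linarith
  from combine[OF this Qterm] show ?thesis unfolding LHS L2 RHS Kterm Qc .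
qed

lemma lax_row_times_power:
  assumes j: "j < N"
  shows "(\<Sum>k<N. lax_matrix {..<N} {..<M} (real (N - M)) Z W j k * Z k ^ e)
      = (\<Sum>k\<in>{..<N} - {j}. - (Z j ^ e) - 2 * (\<Sum>i<e. Z j ^ (e - Suc i) * Z k ^ Suc i)) + real (N - M) * Z j ^ e +
        (\<Sum>q<M. Z j ^ e - 2 * (\<Sum>i<e. W q * (- W q) ^ (e - Suc i) * Z j ^ i) - 2 * (W q * (- W q) ^ e / (Z j + W q)))"
proof -
  define x where "x = Z j"
  define K where "K = {..<N} - {j}"
  have Kne: "\<And>k. k \<in> K \<Longrightarrow> x \<noteq> Z k"
    using Zinj j unfolding K_def x_def inj_on_def by force
  have x0: "x > 0" using Zpos j x_def by auto
  have qne: "\<And>q. q < M \<Longrightarrow> x + W q \<noteq> 0" using Wpos x0 by (smt (verit))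
  have regroup: "(- a + c + b) * X + d = (d - a * X) + c * X + b * X" for a b c d X :: real
    by (simp add: algebra_simps)
  have "(\<Sum>k<N. lax_matrix {..<N} {..<M} (real (N - M)) Z W j k * Z k ^ e)
      = lax_matrix {..<N} {..<M} (real (N - M)) Z W j j * x ^ e + (\<Sum>k\<in>K. lax_matrix {..<N} {..<M} (real (N - M)) Z W j k * Z k ^ e)"
    unfolding K_def x_def using j by (subst sum.remove[of _ j]) auto
  also have "\<dots> = (- (\<Sum>k\<in>K. (x + Z k) / (x - Z k)) + real (N - M) + (\<Sum>q<M. (x - W q) / (x + W q))) * x ^ e
        + (\<Sum>k\<in>K. 2 * Z k / (x - Z k) * Z k ^ e)"
    unfolding lax_matrix_def K_def x_def by (intro arg_cong2[where f="(+)"] sum.cong) auto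
  also have "\<dots> = (\<Sum>k\<in>K. 2 * Z k / (x - Z k) * Z k ^ e - (x + Z k) / (x - Z k) * x ^ e)
        + real (N - M) * x ^ e + (\<Sum>q<M. (x - W q) / (x + W q) * x ^ e)"
    unfolding regroup sum_distrib_right sum_subtractf ..
  also have "(\<Sum>k\<in>K. 2 * Z k / (x - Z k) * Z k ^ e - (x + Z k) / (x - Z k) * x ^ e)
      = (\<Sum>k\<in>K. - (x ^ e) - 2 * (\<Sum>i<e. x ^ (e - Suc i) * Z k ^ Suc i))"
    by (intro sum.cong refl cauchy_power_identity Kne)
  also have "(\<Sum>q<M. (x - W q) / (x + W q) * x ^ e)
      = (\<Sum>q<M. x ^ e - 2 * (\<Sum>i<e. W q * (- W q) ^ (e - Suc i) * x ^ i) - 2 * (W q * (- W q) ^ e / (x + W q)))"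
  proof (intro sum.cong refl)
    fix q assume "q \<in> {..<M}"
    then have q: "x + W q \<noteq> 0" using qne by simp
    show "(x - W q) / (x + W q) * x ^ e = x ^ e - 2 * (\<Sum>i<e. W q * (- W q) ^ (e - Suc i) * x ^ i) - 2 * (W q * (- W q) ^ e / (x + W q))"
      unfolding cauchy_quotient_power_identity[OF q] by simp
  qed
  finally show ?thesis unfolding x_def K_def .
qed

lemma lax_vandermonde_column:
  assumes j: "j < N" and e: "e < N - M"
  shows "(\<Sum>k<N. lax_matrix {..<N} {..<M} (real (N - M)) Z W j k * Z k ^ e)
       = Z j ^ e + (\<Sum>q<M. (1 / (Z j + W q)) * cv_block12 W q e) + (\<Sum>a<N - M. Z j ^ a * cv_block22 N M Z W a e)"
proof -
  define x where "x = Z j"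
  define K where "K = {..<N} - {j}"
  define p where "p r = (\<Sum>k<N. Z k ^ r)" for r
  have cK: "card K = N - 1" using j unfolding K_def by simp
  have L: "(\<Sum>k<N. lax_matrix {..<N} {..<M} (real (N - M)) Z W j k * Z k ^ e)
      = (\<Sum>k\<in>K. - (x ^ e) - 2 * (\<Sum>i<e. x ^ (e - Suc i) * Z k ^ Suc i)) + real (N - M) * x ^ e +
        (\<Sum>q<M. x ^ e - 2 * (\<Sum>i<e. W q * (- W q) ^ (e - Suc i) * x ^ i) - 2 * (W q * (- W q) ^ e / (x + W q)))"
    unfolding x_def K_def by (rule lax_row_times_power[OF j])
  have A1: "(\<Sum>k\<in>K. - (x ^ e) - 2 * (\<Sum>i<e. x ^ (e - Suc i) * Z k ^ Suc i))
      = - (real (N - 1) * x ^ e) - 2 * (\<Sum>i<e. x ^ (e - Suc i) * p (Suc i)) + 2 * real e * x ^ e"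
  proof -
    have "(\<Sum>k\<in>K. - (x ^ e) - 2 * (\<Sum>i<e. x ^ (e - Suc i) * Z k ^ Suc i))
        = - (real (N - 1) * x ^ e) - 2 * (\<Sum>k\<in>K. \<Sum>i<e. x ^ (e - Suc i) * Z k ^ Suc i)"
      unfolding sum_subtractf sum_distrib_left[symmetric] cK[symmetric] by simp
    also have "(\<Sum>k\<in>K. \<Sum>i<e. x ^ (e - Suc i) * Z k ^ Suc i) = (\<Sum>i<e. x ^ (e - Suc i) * (\<Sum>k\<in>K. Z k ^ Suc i))"
      unfolding sum_distrib_left by (rule sum.swap)
    also have "(\<Sum>i<e. x ^ (e - Suc i) * (\<Sum>k\<in>K. Z k ^ Suc i)) = (\<Sum>i<e. x ^ (e - Suc i) * p (Suc i) - x ^ e)"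
    proof (intro sum.cong refl)
      fix i assume i: "i \<in> {..<e}"
      have "(\<Sum>k\<in>K. Z k ^ Suc i) = p (Suc i) - x ^ Suc i"
        unfolding p_def K_def x_def using j by (simp add: sum.remove[of "{..<N}" j])
      moreover have "x ^ (e - Suc i) * x ^ Suc i = x ^ e" using i by (subst power_add[symmetric]) simp
      ultimately show "x ^ (e - Suc i) * (\<Sum>k\<in>K. Z k ^ Suc i) = x ^ (e - Suc i) * p (Suc i) - x ^ e"
        by (simp add: right_diff_distrib)
    qed
    also have "\<dots> = (\<Sum>i<e. x ^ (e - Suc i) * p (Suc i)) - real e * x ^ e" by (simp add: sum_subtractf)
    finally show ?thesis by (simp add: right_diff_distrib)
  qed
  have A2: "(\<Sum>q<M. x ^ e - 2 * (\<Sum>i<e. W q * (- W q) ^ (e - Suc i) * x ^ i) - 2 * (W q * (- W q) ^ e / (x + W q)))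
      = real M * x ^ e - 2 * (\<Sum>i<e. x ^ i * (\<Sum>q<M. W q * (- W q) ^ (e - Suc i))) + (\<Sum>q<M. (1 / (x + W q)) * cv_block12 W q e)"
  proof -
    have g: "(\<Sum>q<M. (1 / (x + W q)) * cv_block12 W q e) = - 2 * (\<Sum>q<M. W q * (- W q) ^ e / (x + W q))"
      unfolding cv_block12_def sum_distrib_left by (intro sum.cong refl) simp
    have sw: "(\<Sum>q<M. \<Sum>i<e. W q * (- W q) ^ (e - Suc i) * x ^ i) = (\<Sum>i<e. x ^ i * (\<Sum>q<M. W q * (- W q) ^ (e - Suc i)))"
      unfolding sum_distrib_left by (subst sum.swap) (simp only: mult.commute)
    show ?thesis unfolding sum_subtractf sum_distrib_left[symmetric] g sw by simp
  qed
  have R: "(\<Sum>a<N - M. x ^ a * cv_block22 N M Z W a e) = 2 * real e * x ^ e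
       - 2 * (\<Sum>a<e. x ^ a * p (e - a)) - 2 * (\<Sum>a<e. x ^ a * (\<Sum>q<M. W q * (- W q) ^ (e - Suc a)))"
  proof -
    have "(\<Sum>a<N - M. x ^ a * cv_block22 N M Z W a e) = (\<Sum>a<Suc e. x ^ a * cv_block22 N M Z W a e)"
      using e by (intro sum.mono_neutral_right) (auto simp: cv_block22_def)
    also have "\<dots> = (\<Sum>a<e. x ^ a * cv_block22 N M Z W a e) + x ^ e * cv_block22 N M Z W e e"
      by simp
    also have "(\<Sum>a<e. x ^ a * cv_block22 N M Z W a e) = (\<Sum>a<e. - 2 * (x ^ a * p (e - a)) - 2 * (x ^ a * (\<Sum>q<M. W q * (- W q) ^ (e - Suc a))))"
      by (intro sum.cong refl) (simp add: cv_block22_def p_def right_diff_distrib)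
    also have "\<dots> = - 2 * (\<Sum>a<e. x ^ a * p (e - a)) - 2 * (\<Sum>a<e. x ^ a * (\<Sum>q<M. W q * (- W q) ^ (e - Suc a)))"
      by (simp only: sum_subtractf sum_distrib_left[symmetric])
    also have "x ^ e * cv_block22 N M Z W e e = 2 * real e * x ^ e" by (simp add: cv_block22_def)
    finally show ?thesis by simp
  qed
  have re: "(\<Sum>a<e. x ^ a * p (e - a)) = (\<Sum>i<e. x ^ (e - Suc i) * p (Suc i))"
  proof -
    have "(\<Sum>i<e. x ^ (e - Suc i) * p (Suc i)) = (\<Sum>i<e. (\<lambda>a. x ^ a * p (e - a)) (e - Suc i))"
      by (intro sum.cong refl) (simp add: Suc_diff_Suc)
    also have "\<dots> = (\<Sum>a<e. x ^ a * p (e - a))" by (rule sum.nat_diff_reindex)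
    finally show ?thesis by simp
  qed
  have combine: "(- (a * X) - 2 * P + 2 * E * X) + l * X + (m * X - 2 * Q + G) = X + G + (2 * E * X - 2 * P - 2 * Q)"
    if "- a + l + m = 1" for a l m X P Q G E :: real
  proof -
    have "X * (- a + l + m) = X" using that by simp
    then show ?thesis by (simp add: algebra_simps)
  qed
  have "- real (N - 1) + real (N - M) + real M = 1" using j MN by linarith
  from combine[OF this] show ?thesis unfolding L A1 A2 R re x_def[symmetric] .
qed

lemma lax_cv_column:
  assumes j: "j < N" and c: "c < N"
  shows "(\<Sum>k<N. lax_matrix {..<N} {..<M} (real (N - M)) Z W j k * cv_matrix M Z W k c)
       = cv_matrix M Z W j c + (\<Sum>c'<N. cv_matrix M Z W j c' * cv_blocks N M Z W c' c)"
proof (cases "c < M")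
  case True
  have "(\<Sum>c'<N. cv_matrix M Z W j c' * cv_blocks N M Z W c' c) = (\<Sum>m<M. (1 / (Z j + W m)) * cv_block11 N M Z W m c)"
    unfolding sum_lessThan_split[OF MN] using True by (simp add: cv_matrix_def cv_blocks_def)
  then show ?thesis using lax_cauchy_column[OF j True] True by (simp add: cv_matrix_def)
next
  case False
  define e where "e = c - M"
  have e: "e < N - M" using False c e_def by auto
  have ce: "c = M + e" using False e_def by auto
  have "(\<Sum>c'<N. cv_matrix M Z W j c' * cv_blocks N M Z W c' c)
      = (\<Sum>q<M. (1 / (Z j + W q)) * cv_block12 W q e) + (\<Sum>a<N - M. Z j ^ a * cv_block22 N M Z W a e)"
    unfolding sum_lessThan_split[OF MN] using False by (simp add: cv_matrix_def cv_blocks_def e_def)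
  moreover have "(\<Sum>k<N. lax_matrix {..<N} {..<M} (real (N - M)) Z W j k * cv_matrix M Z W k c) = (\<Sum>k<N. lax_matrix {..<N} {..<M} (real (N - M)) Z W j k * Z k ^ e)"
    using False by (simp add: cv_matrix_def e_def)
  ultimately show ?thesis using lax_vandermonde_column[OF j e] False by (simp add: cv_matrix_def e_def)
qed

lemma lax_intertwines_cv:
  "mat N N (\<lambda>(i,j). (if i = j then 1 else 0) + t * lax_matrix {..<N} {..<M} (real (N - M)) Z W i j) * mat N N (\<lambda>(i,j). cv_matrix M Z W i j)
   = mat N N (\<lambda>(i,j). cv_matrix M Z W i j) * mat N N (\<lambda>(a,b). (if a = b then 1 else 0) + t * ((if a = b then 1 else 0) + cv_blocks N M Z W a b))"
proof (rule eq_matI)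
  fix j c assume "j < dim_row (mat N N (\<lambda>(i,j). cv_matrix M Z W i j) * mat N N (\<lambda>(a,b). (if a = b then 1 else 0) + t * ((if a = b then 1 else 0) + cv_blocks N M Z W a b)))"
    "c < dim_col (mat N N (\<lambda>(i,j). cv_matrix M Z W i j) * mat N N (\<lambda>(a,b). (if a = b then 1 else 0) + t * ((if a = b then 1 else 0) + cv_blocks N M Z W a b)))"
  then have j: "j < N" and c: "c < N" by auto
  have l: "(\<Sum>k<N. ((if j = k then 1 else 0) + t * lax_matrix {..<N} {..<M} (real (N - M)) Z W j k) * cv_matrix M Z W k c)
      = cv_matrix M Z W j c + t * (\<Sum>k<N. lax_matrix {..<N} {..<M} (real (N - M)) Z W j k * cv_matrix M Z W k c)"
  proof -
    have "(\<Sum>k<N. ((if j = k then 1 else 0) + t * lax_matrix {..<N} {..<M} (real (N - M)) Z W j k) * cv_matrix M Z W k c)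
        = (\<Sum>k<N. (if k = j then cv_matrix M Z W k c else 0) + t * (lax_matrix {..<N} {..<M} (real (N - M)) Z W j k * cv_matrix M Z W k c))"
      by (intro sum.cong refl) (auto simp: algebra_simps)
    also have "\<dots> = cv_matrix M Z W j c + t * (\<Sum>k<N. lax_matrix {..<N} {..<M} (real (N - M)) Z W j k * cv_matrix M Z W k c)"
      using j by (simp only: sum.distrib sum.delta sum_distrib_left[symmetric]) simp
    finally show ?thesis .
  qed
  have r: "(\<Sum>k<N. cv_matrix M Z W j k * ((if k = c then 1 else 0) + t * ((if k = c then 1 else 0) + cv_blocks N M Z W k c)))
      = cv_matrix M Z W j c + t * (cv_matrix M Z W j c + (\<Sum>k<N. cv_matrix M Z W j k * cv_blocks N M Z W k c))"
  proof -
    have "(\<Sum>k<N. cv_matrix M Z W j k * ((if k = c then 1 else 0) + t * ((if k = c then 1 else 0) + cv_blocks N M Z W k c)))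
        = (\<Sum>k<N. (if k = c then cv_matrix M Z W j k + t * cv_matrix M Z W j k else 0) + t * (cv_matrix M Z W j k * cv_blocks N M Z W k c))"
      by (intro sum.cong refl) (auto simp: algebra_simps)
    also have "\<dots> = cv_matrix M Z W j c + t * (cv_matrix M Z W j c + (\<Sum>k<N. cv_matrix M Z W j k * cv_blocks N M Z W k c))"
      using c by (simp only: sum.distrib sum.delta sum_distrib_left[symmetric]) (simp add: algebra_simps)
    finally show ?thesis .
  qed
  show "(mat N N (\<lambda>(i,j). (if i = j then 1 else 0) + t * lax_matrix {..<N} {..<M} (real (N - M)) Z W i j) * mat N N (\<lambda>(i,j). cv_matrix M Z W i j)) $$ (j, c)
    = (mat N N (\<lambda>(i,j). cv_matrix M Z W i j) * mat N N (\<lambda>(a,b). (if a = b then 1 else 0) + t * ((if a = b then 1 else 0) + cv_blocks N M Z W a b))) $$ (j, c)"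
    unfolding index_mat_mult_mat_lessThan[OF j c] using l r lax_cv_column[OF j c] by simp
qed auto

lemma cv_block11_diag:
  assumes n: "n < M"
  shows "lax_matrix {..<M} {..<N} (real (N - M)) (\<lambda>n. 1 / W n) (\<lambda>k. 1 / Z k) n n = 1 + cv_block11 N M Z W n n"
proof -
  define Q where "Q = {..<M} - {n}"
  have Wn: "W n > 0" using Wpos n by auto
  have cQ: "card Q = M - 1" using n unfolding Q_def by simp
  have "- (\<Sum>m\<in>Q. (1 / W n + 1 / W m) / (1 / W n - 1 / W m)) = (\<Sum>m\<in>Q. - ((1 / W n + 1 / W m) / (1 / W n - 1 / W m)))"
    by (simp add: sum_negf)
  also have "\<dots> = (\<Sum>m\<in>Q. 2 * W m / (W n - W m) + 1)"
  proof (intro sum.cong refl)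
    fix m assume m: "m \<in> Q"
    then have "W m > 0" "W n - W m \<noteq> 0" using Wpos Winj n unfolding Q_def inj_on_def by auto
    then show "- ((1 / W n + 1 / W m) / (1 / W n - 1 / W m)) = 2 * W m / (W n - W m) + 1"
      using Wn by (simp add: divide_simps) (simp add: algebra_simps)
  qed
  also have "\<dots> = (\<Sum>m\<in>Q. 2 * W m / (W n - W m)) + real (M - 1)"
    using cQ by (simp add: sum.distrib)
  finally have A: "- (\<Sum>m\<in>Q. (1 / W n + 1 / W m) / (1 / W n - 1 / W m)) = (\<Sum>m\<in>Q. 2 * W m / (W n - W m)) + real (M - 1)" .
  have "(\<Sum>k<N. (1 / W n - 1 / Z k) / (1 / W n + 1 / Z k)) = (\<Sum>k<N. 2 * Z k / (Z k + W n) - 1)"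
  proof (intro sum.cong refl)
    fix k assume "k \<in> {..<N}"
    then have "Z k > 0" using Zpos by simp
    then show "(1 / W n - 1 / Z k) / (1 / W n + 1 / Z k) = 2 * Z k / (Z k + W n) - 1"
      using Wn by (simp add: divide_simps)
  qed
  also have "\<dots> = (\<Sum>k<N. 2 * Z k / (Z k + W n)) - real N"
    by (simp add: sum_subtractf)
  finally have B: "(\<Sum>k<N. (1 / W n - 1 / Z k) / (1 / W n + 1 / Z k)) = (\<Sum>k<N. 2 * Z k / (Z k + W n)) - real N" .
  have cst: "real (M - 1) + real (N - M) - real N = 1 + (- 2)" using n MN by linarith
  have "lax_matrix {..<M} {..<N} (real (N - M)) (\<lambda>n. 1 / W n) (\<lambda>k. 1 / Z k) n n
      = (\<Sum>m\<in>Q. 2 * W m / (W n - W m)) + real (M - 1) + real (N - M) + ((\<Sum>k<N. 2 * Z k / (Z k + W n)) - real N)"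
    unfolding lax_matrix_def Q_def[symmetric] using A B by simp
  also have "\<dots> = 1 + cv_block11 N M Z W n n"
    unfolding cv_block11_def Q_def[symmetric] using cst by simp
  finally show ?thesis .
qed

lemma lax_dual_eq_conj_cv_block11:
  assumes i: "i < M" and j: "j < M"
  shows "lax_matrix {..<M} {..<N} (real (N - M)) (\<lambda>n. 1 / W n) (\<lambda>k. 1 / Z k) i j
       = W i * ((if j = i then 1 else 0) + cv_block11 N M Z W j i) / W j"
proof (cases "i = j")
  case True
  have "W i \<noteq> 0" using Wpos i by force
  then show ?thesis using True cv_block11_diag[OF i] by simp
next
  case False
  have "2 * (1 / b) / (1 / a - 1 / b) = a * (-2 * b / (a - b)) / b"
    if "a > 0" "b > 0" "a \<noteq> b" for a b :: real
  proof -
    have "a - b \<noteq> 0" "b - a \<noteq> 0" using that by simp_all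
    then show ?thesis using that by (simp add: divide_simps, (simp add: algebra_simps)?)
  qed
  moreover have "W i > 0" "W j > 0" "W i \<noteq> W j"
    using Wpos Winj False i j unfolding inj_on_def by auto
  ultimately have "2 * (1 / W j) / (1 / W i - 1 / W j) = W i * (-2 * W j / (W i - W j)) / W j" by blast
  then show ?thesis using False unfolding lax_matrix_def cv_block11_def by simp
qed

lemma det_id_plus_cv_block11:
  "Determinant.det (mat M M (\<lambda>(a,b). (if a = b then 1 else 0) + t * ((if a = b then 1 else 0) + cv_block11 N M Z W a b)))
   = Determinant.det (mat M M (\<lambda>(i,j). (if i = j then 1 else 0) + t * lax_matrix {..<M} {..<N} (real (N - M)) (\<lambda>n. 1 / W n) (\<lambda>k. 1 / Z k) i j))"
proof -
  let ?R = "mat M M (\<lambda>(a,b). (if a = b then 1 else 0) + t * ((if a = b then 1 else 0) + cv_block11 N M Z W a b))"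
  have "Determinant.det ?R = Determinant.det (transpose_mat ?R)"
    by (rule det_transpose[symmetric, of _ M]) simp
  also have "transpose_mat ?R = mat M M (\<lambda>(i,j). (if j = i then 1 else 0) + t * ((if j = i then 1 else 0) + cv_block11 N M Z W j i))"
    by (rule eq_matI) auto
  also have "Determinant.det \<dots> = det_on {0..<M} (\<lambda>i j. (if j = i then 1 else 0) + t * ((if j = i then 1 else 0) + cv_block11 N M Z W j i))"
    by (rule det_mat_eq_det_on)
  also have "\<dots> = det_on {0..<M} (\<lambda>i j. W i * ((if j = i then 1 else 0) + t * ((if j = i then 1 else 0) + cv_block11 N M Z W j i)) / W j)"
    by (rule det_on_diagonal_conj[symmetric]) (use Wpos in force)
  also have "\<dots> = det_on {0..<M} (\<lambda>i j. (if i = j then 1 else 0) + t * lax_matrix {..<M} {..<N} (real (N - M)) (\<lambda>n. 1 / W n) (\<lambda>k. 1 / Z k) i j)"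
    unfolding det_on_def
  proof (intro sum.cong refl arg_cong2[where f="(*)"] prod.cong)
    fix \<sigma> i assume s: "\<sigma> \<in> {\<sigma>. \<sigma> permutes {0..<M}}" and i: "i \<in> {0..<M}"
    have si: "\<sigma> i < M" using s i permutes_in_image[of \<sigma> "{0..<M}" i] by auto
    have im: "i < M" using i by auto
    have "W i \<noteq> 0" using Wpos im by force
    then show "W i * ((if \<sigma> i = i then 1 else 0) + t * ((if \<sigma> i = i then 1 else 0) + cv_block11 N M Z W (\<sigma> i) i)) / W (\<sigma> i)
        = (if i = \<sigma> i then 1 else 0) + t * lax_matrix {..<M} {..<N} (real (N - M)) (\<lambda>n. 1 / W n) (\<lambda>k. 1 / Z k) i (\<sigma> i)"
      unfolding lax_dual_eq_conj_cv_block11[OF im si] by (cases "\<sigma> i = i") (simp_all add: mult.left_commute)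
  qed
  also have "\<dots> = Determinant.det (mat M M (\<lambda>(i,j). (if i = j then 1 else 0) + t * lax_matrix {..<M} {..<N} (real (N - M)) (\<lambda>n. 1 / W n) (\<lambda>k. 1 / Z k) i j))"
    by (rule det_mat_eq_det_on[symmetric])
  finally show ?thesis .
qed

lemma det_id_plus_cv_blocks:
  "Determinant.det (mat N N (\<lambda>(a,b). (if a = b then 1 else 0) + t * ((if a = b then 1 else 0) + cv_blocks N M Z W a b)))
   = Determinant.det (mat M M (\<lambda>(a,b). (if a = b then 1 else 0) + t * ((if a = b then 1 else 0) + cv_block11 N M Z W a b)))
     * (\<Prod>e<N - M. 1 + t * (1 + 2 * real e))"
proof -
  let ?R1 = "mat M M (\<lambda>(a,b). (if a = b then 1 else 0) + t * ((if a = b then 1 else 0) + cv_block11 N M Z W a b))"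
  let ?R2 = "mat M (N - M) (\<lambda>(a,b). t * cv_block12 W a b)"
  let ?R4 = "mat (N - M) (N - M) (\<lambda>(a,b). (if a = b then 1 else 0) + t * ((if a = b then 1 else 0) + cv_block22 N M Z W a b))"
  have NM: "N = M + (N - M)" using MN by simp
  have eq: "mat N N (\<lambda>(a,b). (if a = b then 1 else 0) + t * ((if a = b then 1 else 0) + cv_blocks N M Z W a b))
      = four_block_mat ?R1 ?R2 (0\<^sub>m (N - M) M) ?R4"
  proof (rule eq_matI)
    fix i j assume i: "i < dim_row (four_block_mat ?R1 ?R2 (0\<^sub>m (N - M) M) ?R4)"
      and j: "j < dim_col (four_block_mat ?R1 ?R2 (0\<^sub>m (N - M) M) ?R4)"
    then have i': "i < N" and j': "j < N" using MN by auto
    show "mat N N (\<lambda>(a,b). (if a = b then 1 else 0) + t * ((if a = b then 1 else 0) + cv_blocks N M Z W a b)) $$ (i, j)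
        = four_block_mat ?R1 ?R2 (0\<^sub>m (N - M) M) ?R4 $$ (i, j)"
      using i j i' j' MN by (auto simp: cv_blocks_def)
  qed (use MN in auto)
  have "Determinant.det (four_block_mat ?R1 ?R2 (0\<^sub>m (N - M) M) ?R4) = Determinant.det ?R1 * Determinant.det ?R4"
    by (rule det_four_block_mat_lower_left_zero) auto
  moreover have "Determinant.det ?R4 = (\<Prod>e<N - M. 1 + t * (1 + 2 * real e))"
  proof -
    have ut: "upper_triangular ?R4" unfolding upper_triangular_def by (auto simp: cv_block22_def)
    have "Determinant.det ?R4 = prod_list (diag_mat ?R4)" by (rule det_upper_triangular[OF ut]) auto
    also have "\<dots> = (\<Prod>e = 0..<N - M. ?R4 $$ (e, e))" by (simp add: prod_list_diag_prod)
    also have "\<dots> = (\<Prod>e<N - M. 1 + t * (1 + 2 * real e))"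
      by (simp add: lessThan_atLeast0 cv_block22_def)
    finally show ?thesis .
  qed
  ultimately show ?thesis using eq by simp
qed

lemma cv_matrix_null_vector_eq_0:
  fixes v :: "nat \<Rightarrow> real"
  assumes null: "\<And>j. j < N \<Longrightarrow> (\<Sum>c<N. cv_matrix M Z W j c * v c) = 0" and c: "c < N"
  shows "v c = 0"
proof -
  define Qp where "Qp = (\<Prod>m<M. [:W m, 1:])"
  define P where "P = (\<Sum>e<N - M. monom (v (M + e)) e)"
  define R where "R = (\<Sum>c<M. Polynomial.smult (v c) (\<Prod>m\<in>{..<M} - {c}. [:W m, 1:])) + Qp * P"
  \<comment> \<open>the row sums of \<open>cv_matrix\<close> against \<open>v\<close>, with denominators cleared: \<open>R(Z\<^sub>j) = Qp(Z\<^sub>j) \<cdot> row\<^sub>j\<close>\<close>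
  have polyQ: "poly Qp z = (\<Prod>m<M. z + W m)" for z unfolding Qp_def poly_prod by (simp add: add.commute)
  have polyR: "poly R z = (\<Sum>c<M. v c * (\<Prod>m\<in>{..<M} - {c}. z + W m)) + poly Qp z * poly P z" for z
    unfolding R_def polyQ[symmetric] by (simp add: poly_sum poly_prod add.commute)
  have root: "poly R (Z j) = 0" if j: "j < N" for j
  proof -
    have prodrm: "(\<Prod>m\<in>{..<M} - {c}. Z j + W m) = poly Qp (Z j) / (Z j + W c)" if c: "c < M" for c
    proof -
      have "poly Qp (Z j) = (Z j + W c) * (\<Prod>m\<in>{..<M} - {c}. Z j + W m)"
        unfolding polyQ using c by (simp add: prod.remove[of "{..<M}" c])
      moreover have "Z j + W c > 0" using Zpos[OF j] Wpos[OF c] by simp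
      ultimately show ?thesis by simp
    qed
    have s1: "(\<Sum>c<M. v c * (\<Prod>m\<in>{..<M} - {c}. Z j + W m)) = (\<Sum>c<M. poly Qp (Z j) * (1 / (Z j + W c) * v c))"
      by (intro sum.cong refl) (simp add: prodrm)
    have s2: "(\<Sum>c<N. cv_matrix M Z W j c * v c) = (\<Sum>c<M. 1 / (Z j + W c) * v c) + (\<Sum>e<N - M. Z j ^ e * v (M + e))"
      unfolding sum_lessThan_split[OF MN] by (simp add: cv_matrix_def)
    have "poly R (Z j) = poly Qp (Z j) * (\<Sum>c<N. cv_matrix M Z W j c * v c)"
      unfolding polyR s1 s2 P_def distrib_left sum_distrib_left[symmetric]
      by (simp add: poly_sum poly_monom mult.commute)
    then show ?thesis using null[OF j] by simp
  qed
  have degR: "degree R < N"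
  proof -
    have "degree (Polynomial.smult (v c) (\<Prod>m\<in>{..<M} - {c}. [:W m, 1:])) \<le> N - 1" if c: "c \<in> {..<M}" for c
    proof -
      have "degree (Polynomial.smult (v c) (\<Prod>m\<in>{..<M} - {c}. [:W m, 1:])) \<le> sum (degree \<circ> (\<lambda>m. [:W m, 1:])) ({..<M} - {c})"
        by (rule order.trans[OF degree_smult_le degree_prod_sum_le]) simp
      also have "\<dots> \<le> N - 1" using c MN by simp
      finally show ?thesis .
    qed
    moreover have "degree (Qp * P) \<le> N - 1"
    proof (cases "N - M = 0")
      case True
      then show ?thesis unfolding P_def by simp
    next
      case False
      have "degree Qp \<le> M"
        using degree_prod_sum_le[of "{..<M}" "\<lambda>m. [:W m, 1:]"] unfolding Qp_def by simp
      moreover have "degree P \<le> N - M - 1"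
        unfolding P_def by (rule degree_sum_le) (auto intro: order.trans[OF degree_monom_le])
      ultimately show ?thesis using False degree_mult_le[of Qp P] by linarith
    qed
    ultimately have "degree R \<le> N - 1"
      unfolding R_def by (intro degree_add_le degree_sum_le) auto
    then show ?thesis using c by linarith
  qed
  have R0: "R = 0" using Zinj degR root by (rule poly_eq_0_if_roots_exceed_degree)
  have top: "v c = 0" if c: "c < M" for c
  proof -
    have others: "(\<Prod>m\<in>{..<M} - {c'}. - W c + W m) = 0" if "c' \<in> {..<M} - {c}" for c'
      using c that by (intro prod_zero) auto
    have "(\<Sum>c'<M. v c' * (\<Prod>m\<in>{..<M} - {c'}. - W c + W m))
        = v c * (\<Prod>m\<in>{..<M} - {c}. - W c + W m) + (\<Sum>c'\<in>{..<M} - {c}. v c' * (\<Prod>m\<in>{..<M} - {c'}. - W c + W m))"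
      by (rule sum.remove) (use c in auto)
    also have "(\<Sum>c'\<in>{..<M} - {c}. v c' * (\<Prod>m\<in>{..<M} - {c'}. - W c + W m)) = 0"
      using others by (intro sum.neutral) simp
    finally have "(\<Sum>c'<M. v c' * (\<Prod>m\<in>{..<M} - {c'}. - W c + W m)) = v c * (\<Prod>m\<in>{..<M} - {c}. - W c + W m)"
      by simp
    moreover have "poly Qp (- W c) = 0" unfolding polyQ using c by (intro prod_zero) auto
    ultimately have "v c * (\<Prod>m\<in>{..<M} - {c}. - W c + W m) = 0"
      using R0 polyR[of "- W c"] by simp
    moreover have "- W c + W m \<noteq> 0" if "m \<in> {..<M} - {c}" for m
      using that c Winj unfolding inj_on_def by auto
    ultimately show ?thesis by (simp add: prod_zero_iff)
  qed
  have P0: "P = 0"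
  proof (rule poly_eq_0_if_pos_roots)
    fix z :: real assume z: "z > 0"
    have "poly Qp z > 0" unfolding polyQ using z Wpos by (intro prod_pos) (auto intro: add_pos_pos)
    then show "poly P z = 0" using R0 polyR[of z] top by simp
  qed
  show ?thesis
  proof (cases "c < M")
    case True
    then show ?thesis by (rule top)
  next
    case False
    then have "coeff P (c - M) = v c" unfolding P_def coeff_sum_monom[OF finite_lessThan] using c by simp
    then show ?thesis using P0 by simp
  qed
qed

lemma det_cv_matrix_nonzero: "Determinant.det (mat N N (\<lambda>(i,j). cv_matrix M Z W i j)) \<noteq> 0"
proof
  let ?A = "mat N N (\<lambda>(i,j). cv_matrix M Z W i j)"
  assume "Determinant.det ?A = 0"
  then obtain v where v: "v \<in> carrier_vec N" "v \<noteq> 0\<^sub>v N" "?A *\<^sub>v v = 0\<^sub>v N"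
    using det_0_iff_vec_prod_zero_field[of ?A N] by auto
  have "(\<Sum>c<N. cv_matrix M Z W j c * v $ c) = 0" if j: "j < N" for j
  proof -
    have "(?A *\<^sub>v v) $ j = 0" using v(3) j by simp
    then show ?thesis using j v(1) by (simp add: scalar_prod_def lessThan_atLeast0)
  qed
  then have "v = 0\<^sub>v N"
    using cv_matrix_null_vector_eq_0[of "\<lambda>c. v $ c"] v(1) by (intro eq_vecI) auto
  then show False using v(2) by simp
qed

theorem det_id_plus_lax_duality:
  "Determinant.det (mat N N (\<lambda>(i,j). (if i = j then 1 else 0) + t * lax_matrix {..<N} {..<M} (real (N - M)) Z W i j))
   = (\<Prod>e<N - M. 1 + t * (1 + 2 * real e))
     * Determinant.det (mat M M (\<lambda>(i,j). (if i = j then 1 else 0) + t * lax_matrix {..<M} {..<N} (real (N - M)) (\<lambda>n. 1 / W n) (\<lambda>k. 1 / Z k) i j))"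
proof -
  let ?L = "mat N N (\<lambda>(i,j). (if i = j then 1 else 0) + t * lax_matrix {..<N} {..<M} (real (N - M)) Z W i j)"
  let ?W = "mat N N (\<lambda>(i,j). cv_matrix M Z W i j)"
  let ?R = "mat N N (\<lambda>(a,b). (if a = b then 1 else 0) + t * ((if a = b then 1 else 0) + cv_blocks N M Z W a b))"
  have e1: "Determinant.det (?L * ?W) = Determinant.det ?L * Determinant.det ?W" by (rule det_mult) auto
  have e2: "Determinant.det (?W * ?R) = Determinant.det ?W * Determinant.det ?R" by (rule det_mult) auto
  have "Determinant.det ?L * Determinant.det ?W = Determinant.det ?W * Determinant.det ?R"
    unfolding e1[symmetric] e2[symmetric] lax_intertwines_cv[of t] ..
  then have "Determinant.det ?L = Determinant.det ?R" using det_cv_matrix_nonzero by (simp add: mult.commute)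
  then show ?thesis unfolding det_id_plus_cv_blocks det_id_plus_cv_block11 by simp
qed

end

definition esym_odd :: "nat \<Rightarrow> nat \<Rightarrow> nat" where
  "esym_odd l j = (\<Sum>A\<in>{A. A \<subseteq> {1..l} \<and> card A = j}. \<Prod>a\<in>A. 2 * a - 1)"

lemma lax_matrix_shift:
  "lax_matrix {1..n} {1..m} c Z W (Suc i) (Suc j) = lax_matrix {..<n} {..<m} c (\<lambda>k. Z (Suc k)) (\<lambda>k. W (Suc k)) i j"
proof -
  have "{1..n} - {Suc i} = Suc ` ({..<n} - {i})" "{1..m} = Suc ` {..<m}"
    by (simp_all add: image_set_diff image_Suc_lessThan)
  then have shift: "(\<Sum>k\<in>{1..n} - {Suc i}. f k) = (\<Sum>k\<in>{..<n} - {i}. f (Suc k))"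
      "(\<Sum>k\<in>{1..m}. f k) = (\<Sum>k<m. f (Suc k))" for f :: "nat \<Rightarrow> real"
    by (simp_all add: sum.reindex)
  show ?thesis unfolding lax_matrix_def shift by simp
qed

lemma prod_odd_factors_eq_sum_esym_odd:
  "(\<Prod>e<l. 1 + t * (1 + 2 * real e)) = (\<Sum>i\<le>l. t ^ i * real (esym_odd l i))"
proof -
  have "(\<Prod>e<l. 1 + t * (1 + 2 * real e)) = (\<Prod>a\<in>{1..l}. t * real (2 * a - 1) + 1)"
  proof -
    have "{1..l} = Suc ` {..<l}" by (simp add: image_Suc_lessThan)
    then have "(\<Prod>a\<in>{1..l}. t * real (2 * a - 1) + 1) = (\<Prod>e<l. t * real (2 * Suc e - 1) + 1)"
      by (simp add: prod.reindex)
    also have "\<dots> = (\<Prod>e<l. 1 + t * (1 + 2 * real e))"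
      by (intro prod.cong refl) (simp add: of_nat_diff algebra_simps)
    finally show ?thesis by simp
  qed
  also have "\<dots> = (\<Sum>X\<in>Pow {1..l}. (\<Prod>a\<in>X. t * real (2 * a - 1)) * (\<Prod>a\<in>{1..l} - X. 1))"
    by (rule prod_add) simp
  also have "\<dots> = (\<Sum>X\<in>Pow {1..l}. t ^ card X * (\<Prod>a\<in>X. real (2 * a - 1)))"
    by (intro sum.cong refl) (simp add: prod.distrib)
  also have "\<dots> = (\<Sum>i\<le>l. \<Sum>X\<in>{X\<in>Pow {1..l}. card X = i}. t ^ card X * (\<Prod>a\<in>X. real (2 * a - 1)))"
    by (rule sum.group[symmetric]) (auto simp: card_mono[of "{1..l}", simplified] intro: card_mono)
  also have "\<dots> = (\<Sum>i\<le>l. t ^ i * real (esym_odd l i))"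
    unfolding esym_odd_def of_nat_sum of_nat_prod sum_distrib_left
    by (intro sum.cong refl) auto
  finally show ?thesis .
qed

theorem sum_principal_minors_lax_duality:
  fixes X Y :: "nat \<Rightarrow> real" and N M k :: nat
  assumes Xpos: "\<And>i. i \<in> {1..N} \<Longrightarrow> X i > 0" and Xinj: "inj_on X {1..N}"
    and Ypos: "\<And>i. i \<in> {1..M} \<Longrightarrow> Y i > 0" and Yinj: "inj_on Y {1..M}"
    and MN: "M \<le> N"
  shows "sum_principal_minors N k (lax_matrix {1..N} {1..M} (real (N - M)) X Y)
       = (\<Sum>j=0..min k (N - M). real (esym_odd (N - M) j) * sum_principal_minors M (k - j) (lax_matrix {1..M} {1..N} (real (N - M)) (\<lambda>n. 1 / Y n) (\<lambda>m. 1 / X m)))"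
proof -
  define Z where "Z k = X (Suc k)" for k
  define W where "W k = Y (Suc k)" for k
  define l where "l = N - M"
  define ex where "ex k = sum_principal_minors N k (lax_matrix {1..N} {1..M} (real (N - M)) X Y)" for k
  define ey where "ey k = sum_principal_minors M k (lax_matrix {1..M} {1..N} (real (N - M)) (\<lambda>n. 1 / Y n) (\<lambda>m. 1 / X m))" for k
  have Zpos: "\<And>i. i < N \<Longrightarrow> Z i > 0" unfolding Z_def using Xpos by simp
  have Wpos: "\<And>i. i < M \<Longrightarrow> W i > 0" unfolding W_def using Ypos by simp
  have Zinj: "inj_on Z {..<N}"
  proof (rule inj_onI)
    fix a b assume "a \<in> {..<N}" "b \<in> {..<N}" "Z a = Z b"
    then have "Suc a = Suc b" using inj_onD[OF Xinj, of "Suc a" "Suc b"] unfolding Z_def by simp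
    then show "a = b" by simp
  qed
  have Winj: "inj_on W {..<M}"
  proof (rule inj_onI)
    fix a b assume "a \<in> {..<M}" "b \<in> {..<M}" "W a = W b"
    then have "Suc a = Suc b" using inj_onD[OF Yinj, of "Suc a" "Suc b"] unfolding W_def by simp
    then show "a = b" by simp
  qed
  have ident: "(\<Sum>k\<le>N. t ^ k * ex k) = (\<Sum>i\<le>l. t ^ i * real (esym_odd l i)) * (\<Sum>m\<le>M. t ^ m * ey m)" for t
  proof -
    have "(\<Sum>k\<le>N. t ^ k * ex k) = Determinant.det (mat N N (\<lambda>(i,j). (if i = j then 1 else 0) + t * lax_matrix {1..N} {1..M} (real (N - M)) X Y (Suc i) (Suc j)))"
      unfolding ex_def by (rule det_id_plus_eq_sum_principal_minors[symmetric])
    also have "\<dots> = Determinant.det (mat N N (\<lambda>(i,j). (if i = j then 1 else 0) + t * lax_matrix {..<N} {..<M} (real (N - M)) Z W i j))"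
      unfolding lax_matrix_shift Z_def W_def ..
    also have "\<dots> = (\<Prod>e<N - M. 1 + t * (1 + 2 * real e))
     * Determinant.det (mat M M (\<lambda>(i,j). (if i = j then 1 else 0) + t * lax_matrix {..<M} {..<N} (real (N - M)) (\<lambda>n. 1 / W n) (\<lambda>k. 1 / Z k) i j))"
      by (rule det_id_plus_lax_duality[OF Zpos Zinj Wpos Winj MN])
    also have "Determinant.det (mat M M (\<lambda>(i,j). (if i = j then 1 else 0) + t * lax_matrix {..<M} {..<N} (real (N - M)) (\<lambda>n. 1 / W n) (\<lambda>k. 1 / Z k) i j))
        = Determinant.det (mat M M (\<lambda>(i,j). (if i = j then 1 else 0) + t * lax_matrix {1..M} {1..N} (real (N - M)) (\<lambda>n. 1 / Y n) (\<lambda>m. 1 / X m) (Suc i) (Suc j)))"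
      unfolding lax_matrix_shift Z_def W_def ..
    also have "\<dots> = (\<Sum>m\<le>M. t ^ m * ey m)" unfolding ey_def by (rule det_id_plus_eq_sum_principal_minors)
    finally show ?thesis unfolding prod_odd_factors_eq_sum_esym_odd l_def .
  qed
  have "ex k = (\<Sum>j=0..min k l. real (esym_odd l j) * ey (k - j))"
  proof (rule coeff_eq_of_polynomial_product[OF ident])
    show "ex k = 0" if "N < k" for k unfolding ex_def using that by (rule sum_principal_minors_eq_0)
    show "ey m = 0" if "M < m" for m unfolding ey_def using that by (rule sum_principal_minors_eq_0)
    show "M + l \<le> N" unfolding l_def using MN by simp
  qed
  then show ?thesis unfolding ex_def ey_def l_def .
qed

lemma mpartial_exp_sum:
  fixes S :: "nat set" and \<phi> \<phi>' :: "real \<Rightarrow> real" and C :: real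
  assumes fin: "finite S" and der: "\<And>t. (\<phi> has_real_derivative \<phi>' t) (at t)"
  shows "distinct ms \<Longrightarrow> set ms \<subseteq> S \<Longrightarrow>
    mpartial (\<lambda>v. complex_of_real (exp (C + (\<Sum>i\<in>S. \<phi> (v i))))) ms
    = (\<lambda>v. complex_of_real (exp (C + (\<Sum>i\<in>S. \<phi> (v i)))) * (\<Prod>m\<in>set ms. complex_of_real (\<phi>' (v m))))"
proof (induction ms)
  case Nil
  then show ?case by simp
next
  case (Cons m ms)
  have m: "m \<in> S" "m \<notin> set ms" and ms: "distinct ms" "set ms \<subseteq> S" using Cons.prems by auto
  have IH: "mpartial (\<lambda>v. complex_of_real (exp (C + (\<Sum>i\<in>S. \<phi> (v i))))) ms
    = (\<lambda>v. complex_of_real (exp (C + (\<Sum>i\<in>S. \<phi> (v i)))) * (\<Prod>m\<in>set ms. complex_of_real (\<phi>' (v m))))"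
    using Cons.IH ms by simp
  show ?case
  proof (rule ext)
    fix v :: "nat \<Rightarrow> real"
    define P where "P = (\<Prod>m\<in>set ms. complex_of_real (\<phi>' (v m)))"
    define C2 where "C2 = C + (\<Sum>i\<in>S - {m}. \<phi> (v i))"
    have sumt: "(\<Sum>i\<in>S. \<phi> ((v(m := t)) i)) = \<phi> t + (\<Sum>i\<in>S - {m}. \<phi> (v i))" for t
    proof -
      have "(\<Sum>i\<in>S. \<phi> ((v(m := t)) i)) = \<phi> ((v(m := t)) m) + (\<Sum>i\<in>S - {m}. \<phi> ((v(m := t)) i))"
        by (rule sum.remove[OF fin m(1)])
      also have "(\<Sum>i\<in>S - {m}. \<phi> ((v(m := t)) i)) = (\<Sum>i\<in>S - {m}. \<phi> (v i))"
        by (intro sum.cong refl) auto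
      finally show ?thesis by simp
    qed
    have Pt: "(\<Prod>j\<in>set ms. complex_of_real (\<phi>' ((v(m := t)) j))) = P" for t
      unfolding P_def using m(2) by (intro prod.cong refl) auto
    have fun_eq: "(\<lambda>t. complex_of_real (exp (C + (\<Sum>i\<in>S. \<phi> ((v(m := t)) i)))) * (\<Prod>j\<in>set ms. complex_of_real (\<phi>' ((v(m := t)) j))))
        = (\<lambda>t. complex_of_real (exp (C2 + \<phi> t)) * P)"
      unfolding sumt Pt C2_def by (simp add: algebra_simps)
    have d: "((\<lambda>t. exp (C2 + \<phi> t)) has_real_derivative exp (C2 + \<phi> (v m)) * \<phi>' (v m)) (at (v m))"
      using der[of "v m"] by (auto intro!: derivative_eq_intros)
    have dv: "((\<lambda>t. complex_of_real (exp (C2 + \<phi> t)) * P) has_vector_derivative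
        complex_of_real (exp (C2 + \<phi> (v m)) * \<phi>' (v m)) * P) (at (v m))"
      by (rule has_vector_derivative_mult_left[OF has_vector_derivative_of_real[OF d]])
    have ev: "exp (C2 + \<phi> (v m)) = exp (C + (\<Sum>i\<in>S. \<phi> (v i)))"
    proof -
      have "(\<Sum>i\<in>S. \<phi> (v i)) = \<phi> (v m) + (\<Sum>i\<in>S - {m}. \<phi> (v i))" by (rule sum.remove[OF fin m(1)])
      then show ?thesis unfolding C2_def by (simp add: algebra_simps)
    qed
    have "mpartial (\<lambda>v. complex_of_real (exp (C + (\<Sum>i\<in>S. \<phi> (v i))))) (m # ms) v
        = vector_derivative (\<lambda>t. complex_of_real (exp (C2 + \<phi> t)) * P) (at (v m))"
      unfolding mpartial.simps IH partial_at_def fun_eq ..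
    also have "\<dots> = complex_of_real (exp (C2 + \<phi> (v m)) * \<phi>' (v m)) * P"
      by (rule vector_derivative_at[OF dv])
    also have "\<dots> = complex_of_real (exp (C + (\<Sum>i\<in>S. \<phi> (v i)))) * (\<Prod>m\<in>set (m # ms). complex_of_real (\<phi>' (v m)))"
      unfolding ev P_def using m(2) by simp
    finally show "mpartial (\<lambda>v. complex_of_real (exp (C + (\<Sum>i\<in>S. \<phi> (v i))))) (m # ms) v
        = complex_of_real (exp (C + (\<Sum>i\<in>S. \<phi> (v i)))) * (\<Prod>m\<in>set (m # ms). complex_of_real (\<phi>' (v m)))" .
  qed
qed

lemma Sigma_op_eq_sum_principal_minors:
  fixes f :: "(nat \<Rightarrow> real) \<Rightarrow> complex" and D :: "nat \<Rightarrow> complex"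
  assumes partials: "\<And>J. J \<subseteq> {1..n} \<Longrightarrow> mpartial f (sorted_list_of_set J) x = f x * (\<Prod>j\<in>J. D j)"
  shows "Sigma_op hbar mu g n k s f x = f x * sum_principal_minors n k (\<lambda>i j. if i = j
      then zE mu g n (\<lambda>m. s * x m) i + (- \<i> * complex_of_real hbar * complex_of_real s) * D i
      else Lnr_offdiag mu g (\<lambda>m. s * x m) i j)"
proof -
  define c where "c = - \<i> * complex_of_real hbar * complex_of_real s"
  define xs where "xs = (\<lambda>m. s * x m)"
  define A where "A = (\<lambda>i j. if i = j then zE mu g n xs i + c * D i else Lnr_offdiag mu g xs i j)"
  have "Sigma_op hbar mu g n k s f x = (\<Sum>I\<in>{I. I \<subseteq> {1..n} \<and> card I = k}. f x * det_on I A)"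
    unfolding Sigma_op_def Let_def xs_def[symmetric] c_def[symmetric]
  proof (intro sum.cong refl)
    fix I assume "I \<in> {I. I \<subseteq> {1..n} \<and> card I = k}"
    then have I: "I \<subseteq> {1..n}" by simp
    have fI: "finite I" using I finite_subset by auto
    show "(\<Sum>\<sigma>\<in>{\<sigma>. \<sigma> permutes I}. of_int (sign \<sigma>) * (\<Prod>j\<in>{j \<in> I. \<sigma> j \<noteq> j}. Lnr_offdiag mu g xs j (\<sigma> j)) *
          (\<Sum>J\<in>Pow {j \<in> I. \<sigma> j = j}. (\<Prod>j\<in>{j \<in> I. \<sigma> j = j} - J. zE mu g n xs j) * c ^ card J *
            mpartial f (sorted_list_of_set J) x)) = f x * det_on I A"
      unfolding det_on_def sum_distrib_left[where r="f x"]
    proof (rule sum.cong[OF refl])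
      fix \<sigma> assume "\<sigma> \<in> {\<sigma>. \<sigma> permutes I}"
      define F where "F = {j \<in> I. \<sigma> j = j}"
      have fF: "finite F" unfolding F_def using fI by auto
      have FI: "F \<subseteq> {1..n}" unfolding F_def using I by auto
      have inner: "(\<Sum>J\<in>Pow F. (\<Prod>j\<in>F - J. zE mu g n xs j) * c ^ card J * mpartial f (sorted_list_of_set J) x)
          = f x * (\<Prod>j\<in>F. c * D j + zE mu g n xs j)"
      proof -
        have "(\<Sum>J\<in>Pow F. (\<Prod>j\<in>F - J. zE mu g n xs j) * c ^ card J * mpartial f (sorted_list_of_set J) x)
            = (\<Sum>J\<in>Pow F. f x * ((\<Prod>j\<in>J. c * D j) * (\<Prod>j\<in>F - J. zE mu g n xs j)))"
        proof (intro sum.cong refl)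
          fix J assume "J \<in> Pow F"
          then have J: "J \<subseteq> {1..n}" "finite J" using FI fF finite_subset by auto
          show "(\<Prod>j\<in>F - J. zE mu g n xs j) * c ^ card J * mpartial f (sorted_list_of_set J) x
              = f x * ((\<Prod>j\<in>J. c * D j) * (\<Prod>j\<in>F - J. zE mu g n xs j))"
            unfolding partials[OF J(1)] prod.distrib using J(2) by (simp add: mult_ac)
        qed
        also have "\<dots> = f x * (\<Prod>j\<in>F. c * D j + zE mu g n xs j)"
          unfolding sum_distrib_left[symmetric] by (simp add: prod_add[OF fF])
        finally show ?thesis .
      qed
      have "(\<Prod>i\<in>I. A i (\<sigma> i)) = (\<Prod>i\<in>{i\<in>I. \<not> \<sigma> i = i}. A i (\<sigma> i)) * (\<Prod>i\<in>{i\<in>I. \<sigma> i = i}. A i (\<sigma> i))"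
        by (subst prod.Int_Diff[OF fI, of _ "{i. \<sigma> i = i}"]) (simp add: Int_def set_diff_eq mult.commute)
      also have "(\<Prod>i\<in>{i\<in>I. \<not> \<sigma> i = i}. A i (\<sigma> i)) = (\<Prod>j\<in>{j \<in> I. \<sigma> j \<noteq> j}. Lnr_offdiag mu g xs j (\<sigma> j))"
        unfolding A_def by (intro prod.cong) auto
      also have "(\<Prod>i\<in>{i\<in>I. \<sigma> i = i}. A i (\<sigma> i)) = (\<Prod>j\<in>F. c * D j + zE mu g n xs j)"
        unfolding A_def F_def by (intro prod.cong) (auto simp: add.commute)
      finally have pA: "(\<Prod>i\<in>I. A i (\<sigma> i)) = (\<Prod>j\<in>{j \<in> I. \<sigma> j \<noteq> j}. Lnr_offdiag mu g xs j (\<sigma> j)) * (\<Prod>j\<in>F. c * D j + zE mu g n xs j)" .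
      show "of_int (sign \<sigma>) * (\<Prod>j\<in>{j \<in> I. \<sigma> j \<noteq> j}. Lnr_offdiag mu g xs j (\<sigma> j)) *
          (\<Sum>J\<in>Pow {j \<in> I. \<sigma> j = j}. (\<Prod>j\<in>{j \<in> I. \<sigma> j = j} - J. zE mu g n xs j) * c ^ card J *
            mpartial f (sorted_list_of_set J) x) = f x * (of_int (sign \<sigma>) * (\<Prod>i\<in>I. A i (\<sigma> i)))"
        unfolding F_def[symmetric] inner pA by (simp add: mult_ac)
    qed
  qed
  also have "\<dots> = f x * sum_principal_minors n k A" unfolding sum_principal_minors_def sum_distrib_left ..
  finally show ?thesis unfolding A_def c_def xs_def .
qed

definition lax_hyperbolic :: "nat set \<Rightarrow> nat set \<Rightarrow> real \<Rightarrow> (nat \<Rightarrow> real) \<Rightarrow> (nat \<Rightarrow> real) \<Rightarrow> nat \<Rightarrow> nat \<Rightarrow> real" where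
  "lax_hyperbolic I Q c p q i j = (if i = j then - (\<Sum>k\<in>I - {i}. cosh (p i - p k) / sinh (p i - p k)) + c
     + (\<Sum>r\<in>Q. sinh (p i - q r) / cosh (p i - q r)) else 1 / sinh (p i - p j))"

lemma cosh_diff_eq_exp:
  fixes a b :: real
  shows "cosh (a - b) = (exp (2 * a) + exp (2 * b)) / (2 * exp a * exp b)"
  unfolding exp_double by (simp add: cosh_def exp_diff exp_minus power2_eq_square field_simps)

lemma sinh_diff_eq_exp:
  fixes a b :: real
  shows "sinh (a - b) = (exp (2 * a) - exp (2 * b)) / (2 * exp a * exp b)"
  unfolding exp_double by (simp add: sinh_def exp_diff exp_minus power2_eq_square field_simps)

lemma lax_hyperbolic_eq_conj_lax_matrix:
  "lax_hyperbolic I Q c p q i j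
     = exp (p i) * lax_matrix I Q c (\<lambda>k. exp (2 * p k)) (\<lambda>r. exp (2 * q r)) i j / exp (p j)"
proof (cases "i = j")
  case True
  have "cosh (p i - p k) / sinh (p i - p k) = (exp (2 * p i) + exp (2 * p k)) / (exp (2 * p i) - exp (2 * p k))"
    "sinh (p i - q r) / cosh (p i - q r) = (exp (2 * p i) - exp (2 * q r)) / (exp (2 * p i) + exp (2 * q r))"
    for k r unfolding cosh_diff_eq_exp sinh_diff_eq_exp by simp_all
  then show ?thesis using True unfolding lax_hyperbolic_def lax_matrix_def by simp
next
  case False
  have "1 / sinh (p i - p j) = exp (p i) * (2 * exp (2 * p j) / (exp (2 * p i) - exp (2 * p j))) / exp (p j)"
    unfolding sinh_diff_eq_exp by (simp add: exp_double power2_eq_square)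
  then show ?thesis using False unfolding lax_hyperbolic_def lax_matrix_def by simp
qed

definition kernel_phase :: "real \<Rightarrow> real \<Rightarrow> real \<Rightarrow> real \<Rightarrow> (nat \<Rightarrow> real) \<Rightarrow> nat \<Rightarrow> real \<Rightarrow> real" where
  "kernel_phase hbar mu g a w m t = a * t - g / hbar * (\<Sum>n\<in>{1..m}. ln (2 * cosh (mu * (t - w n) / 2)))"

definition kernel_phase' :: "real \<Rightarrow> real \<Rightarrow> real \<Rightarrow> real \<Rightarrow> (nat \<Rightarrow> real) \<Rightarrow> nat \<Rightarrow> real \<Rightarrow> real" where
  "kernel_phase' hbar mu g a w m t =
     a - g / hbar * (\<Sum>n\<in>{1..m}. mu / 2 * (sinh (mu * (t - w n) / 2) / cosh (mu * (t - w n) / 2)))"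

lemma has_real_derivative_ln_2cosh:
  "((\<lambda>t. ln (2 * cosh (mu * (t - c) / 2))) has_real_derivative
     mu / 2 * (sinh (mu * (t - c) / 2) / cosh (mu * (t - c) / 2))) (at t)"
proof -
  have pos: "0 < 2 * cosh (mu * (t - c) / 2)" by simp
  have "((\<lambda>t. 2 * cosh (mu * (t - c) / 2)) has_real_derivative 2 * (sinh (mu * (t - c) / 2) * (mu / 2))) (at t)"
    by (auto intro!: derivative_eq_intros simp: field_simps)
  from DERIV_chain2[OF DERIV_ln_divide[OF pos] this] show ?thesis by (rule DERIV_cong) simp
qed

lemma has_real_derivative_kernel_phase:
  "(kernel_phase hbar mu g a w m has_real_derivative kernel_phase' hbar mu g a w m t) (at t)"
proof -
  have "((\<lambda>t. \<Sum>n\<in>{1..m}. ln (2 * cosh (mu * (t - w n) / 2))) has_real_derivative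
      (\<Sum>n\<in>{1..m}. mu / 2 * (sinh (mu * (t - w n) / 2) / cosh (mu * (t - w n) / 2)))) (at t)"
    by (rule DERIV_sum) (rule has_real_derivative_ln_2cosh)
  then have "((\<lambda>t. a * t - g / hbar * (\<Sum>n\<in>{1..m}. ln (2 * cosh (mu * (t - w n) / 2)))) has_real_derivative
      a * 1 - g / hbar * (\<Sum>n\<in>{1..m}. mu / 2 * (sinh (mu * (t - w n) / 2) / cosh (mu * (t - w n) / 2)))) (at t)"
    by (intro DERIV_diff DERIV_cmult DERIV_ident)
  then show ?thesis unfolding kernel_phase_def[abs_def] kernel_phase'_def by simp
qed

lemma Lnr_E_on_exp_kernel_phase:
  assumes s: "s = 1 \<or> s = -1" and hbar: "hbar \<noteq> 0" and a: "a = - s * mu * g * c / (2 * hbar)"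
  shows "(if i = j then zE mu g n (\<lambda>m. s * u m) i
            + (- \<i> * complex_of_real hbar * complex_of_real s) * complex_of_real (kernel_phase' hbar mu g a w m (u i))
          else Lnr_offdiag mu g (\<lambda>m. s * u m) i j)
    = \<i> * complex_of_real mu * complex_of_real g / 2
        * complex_of_real (lax_hyperbolic {1..n} {1..m} c (\<lambda>i. s * mu * u i / 2) (\<lambda>r. s * mu * w r / 2) i j)"
proof (cases "i = j")
  case False
  have "mu * (s * u i - s * u j) / 2 = s * mu * u i / 2 - s * mu * u j / 2" by (simp add: field_simps)
  then show ?thesis using False unfolding Lnr_offdiag_def lax_hyperbolic_def by simp
next
  case True
  define S1 where "S1 = (\<Sum>k\<in>{1..n} - {i}. cosh (s * mu * u i / 2 - s * mu * u k / 2) / sinh (s * mu * u i / 2 - s * mu * u k / 2))"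
  define S2 where "S2 = (\<Sum>r\<in>{1..m}. sinh (s * mu * u i / 2 - s * mu * w r / 2) / cosh (s * mu * u i / 2 - s * mu * w r / 2))"
  have s2: "s * s = 1" using s by auto
  have z: "zE mu g n (\<lambda>m. s * u m) i = - (\<i> * complex_of_real mu * complex_of_real g / 2) * complex_of_real S1"
  proof -
    have arg: "\<And>k. mu * (s * u i - s * u k) / 2 = s * mu * u i / 2 - s * mu * u k / 2" by (simp add: field_simps)
    show ?thesis unfolding zE_def S1_def of_real_sum arg ..
  qed
  have tanh_odd: "sinh (s * z) / cosh (s * z) = s * (sinh z / cosh z)" for z :: real
    using s by auto
  have "(\<Sum>r\<in>{1..m}. sinh (mu * (u i - w r) / 2) / cosh (mu * (u i - w r) / 2)) = s * S2"
  proof -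
    have "s * S2 = (\<Sum>r\<in>{1..m}. s * (sinh (s * (mu * (u i - w r) / 2)) / cosh (s * (mu * (u i - w r) / 2))))"
      unfolding S2_def sum_distrib_left by (intro sum.cong refl) (simp add: field_simps)
    then show ?thesis unfolding tanh_odd by (simp add: s2 mult.assoc[symmetric])
  qed
  then have p: "kernel_phase' hbar mu g a w m (u i) = a - g / hbar * (mu / 2 * (s * S2))"
    unfolding kernel_phase'_def sum_distrib_left[symmetric] by simp
  have r: "- (hbar * s * a) + hbar * s * (g / hbar * (mu / 2 * (s * S2))) = mu * g / 2 * (c + S2)"
    using hbar s2 unfolding a by (simp add: field_simps)
  have "zE mu g n (\<lambda>m. s * u m) i + (- \<i> * complex_of_real hbar * complex_of_real s) * complex_of_real (kernel_phase' hbar mu g a w m (u i))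
      = \<i> * complex_of_real (- (mu * g / 2 * S1) + (- (hbar * s * a) + hbar * s * (g / hbar * (mu / 2 * (s * S2)))))"
    unfolding z p by (simp add: algebra_simps)
  also have "\<dots> = \<i> * complex_of_real mu * complex_of_real g / 2 * complex_of_real (- S1 + c + S2)"
    unfolding r by (simp add: algebra_simps)
  finally show ?thesis using True unfolding lax_hyperbolic_def S1_def[symmetric] S2_def[symmetric] by simp
qed

lemma Sigma_op_exp_kernel_phase:
  assumes s: "s = 1 \<or> s = -1" and hbar: "hbar \<noteq> 0" and a: "a = - s * mu * g * c / (2 * hbar)"
    and f: "\<And>v. f v = complex_of_real (exp (C + (\<Sum>i\<in>{1..n}. kernel_phase hbar mu g a w m (v i))))"
  shows "Sigma_op hbar mu g n k s f u = f u * ((\<i> * complex_of_real mu * complex_of_real g / 2) ^ k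
     * complex_of_real (sum_principal_minors n k (lax_matrix {1..n} {1..m} c (\<lambda>i. exp (s * mu * u i)) (\<lambda>r. exp (s * mu * w r)))))"
proof -
  have f_eq: "f = (\<lambda>v. complex_of_real (exp (C + (\<Sum>i\<in>{1..n}. kernel_phase hbar mu g a w m (v i)))))"
    by (rule ext) (rule f)
  have derivs: "mpartial f (sorted_list_of_set J) u = f u * (\<Prod>j\<in>J. complex_of_real (kernel_phase' hbar mu g a w m (u j)))"
    if J: "J \<subseteq> {1..n}" for J
  proof -
    have "finite J" using J finite_subset by blast
    then show ?thesis
      unfolding f_eq using mpartial_exp_sum[OF finite_atLeastAtMost has_real_derivative_kernel_phase, of "sorted_list_of_set J"] J
      by simp
  qed
  have "Sigma_op hbar mu g n k s f u = f u * sum_principal_minors n k (\<lambda>i j. if i = j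
      then zE mu g n (\<lambda>m. s * u m) i + (- \<i> * complex_of_real hbar * complex_of_real s) * complex_of_real (kernel_phase' hbar mu g a w m (u i))
      else Lnr_offdiag mu g (\<lambda>m. s * u m) i j)"
    by (rule Sigma_op_eq_sum_principal_minors) (rule derivs)
  also have "(\<lambda>i j. if i = j
      then zE mu g n (\<lambda>m. s * u m) i + (- \<i> * complex_of_real hbar * complex_of_real s) * complex_of_real (kernel_phase' hbar mu g a w m (u i))
      else Lnr_offdiag mu g (\<lambda>m. s * u m) i j)
    = (\<lambda>i j. \<i> * complex_of_real mu * complex_of_real g / 2
        * complex_of_real (exp (s * mu * u i / 2) * lax_matrix {1..n} {1..m} c (\<lambda>i. exp (s * mu * u i)) (\<lambda>r. exp (s * mu * w r)) i j
          / exp (s * mu * u j / 2)))"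
    unfolding Lnr_E_on_exp_kernel_phase[OF s hbar a] lax_hyperbolic_eq_conj_lax_matrix by simp
  finally show ?thesis
    by (simp only: sum_principal_minors_scale_of_real sum_principal_minors_diagonal_conj exp_not_eq_zero not_False_eq_True)
qed

lemma kernelK_eq_exp_kernel_phase_x:
  "kernelK hbar mu g N l x' y = complex_of_real (exp (mu * g * real l / (2 * hbar) * (\<Sum>n=1..N-l. y n)
      + (\<Sum>i\<in>{1..N}. kernel_phase hbar mu g (- (mu * g * real l / (2 * hbar))) y (N - l) (x' i))))"
proof -
  define a where "a = mu * g * real l / (2 * hbar)"
  have "(\<Prod>m=1..N. \<Prod>n=1..N-l. (2 * cosh (mu * (x' m - y n) / 2)) powr (g / hbar))
      = exp (\<Sum>m=1..N. \<Sum>n=1..N-l. g / hbar * ln (2 * cosh (mu * (x' m - y n) / 2)))"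
    by (simp add: powr_def exp_sum)
  then have "kernelK hbar mu g N l x' y = complex_of_real (exp (a * ((\<Sum>n=1..N-l. y n) - (\<Sum>m=1..N. x' m))
      - (\<Sum>m=1..N. \<Sum>n=1..N-l. g / hbar * ln (2 * cosh (mu * (x' m - y n) / 2)))))"
    unfolding kernelK_def a_def by (simp add: exp_diff)
  also have "a * ((\<Sum>n=1..N-l. y n) - (\<Sum>m=1..N. x' m))
      - (\<Sum>m=1..N. \<Sum>n=1..N-l. g / hbar * ln (2 * cosh (mu * (x' m - y n) / 2)))
      = a * (\<Sum>n=1..N-l. y n) + (\<Sum>i\<in>{1..N}. kernel_phase hbar mu g (- a) y (N - l) (x' i))"
    unfolding kernel_phase_def by (simp add: sum_subtractf sum_distrib_left right_diff_distrib sum_negf)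
  finally show ?thesis unfolding a_def .
qed

lemma kernelK_eq_exp_kernel_phase_y:
  "kernelK hbar mu g N l x y' = complex_of_real (exp (- (mu * g * real l / (2 * hbar) * (\<Sum>m=1..N. x m))
      + (\<Sum>i\<in>{1..N-l}. kernel_phase hbar mu g (mu * g * real l / (2 * hbar)) x N (y' i))))"
proof -
  define a where "a = mu * g * real l / (2 * hbar)"
  have cosh_sym: "cosh (mu * (x m - y' n) / 2) = cosh (mu * (y' n - x m) / 2)" for m n
    using cosh_minus[of "mu * (y' n - x m) / 2"] by (simp add: algebra_simps)
  have "(\<Prod>m=1..N. \<Prod>n=1..N-l. (2 * cosh (mu * (x m - y' n) / 2)) powr (g / hbar))
      = exp (\<Sum>m=1..N. \<Sum>n=1..N-l. g / hbar * ln (2 * cosh (mu * (y' n - x m) / 2)))"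
    by (simp add: powr_def exp_sum cosh_sym)
  also have "\<dots> = exp (\<Sum>n=1..N-l. \<Sum>m=1..N. g / hbar * ln (2 * cosh (mu * (y' n - x m) / 2)))"
    by (subst sum.swap) (rule refl)
  finally have "kernelK hbar mu g N l x y' = complex_of_real (exp (a * ((\<Sum>n=1..N-l. y' n) - (\<Sum>m=1..N. x m))
      - (\<Sum>n=1..N-l. \<Sum>m=1..N. g / hbar * ln (2 * cosh (mu * (y' n - x m) / 2)))))"
    unfolding kernelK_def a_def by (simp add: exp_diff)
  also have "a * ((\<Sum>n=1..N-l. y' n) - (\<Sum>m=1..N. x m))
      - (\<Sum>n=1..N-l. \<Sum>m=1..N. g / hbar * ln (2 * cosh (mu * (y' n - x m) / 2)))
      = - (a * (\<Sum>m=1..N. x m)) + (\<Sum>i\<in>{1..N-l}. kernel_phase hbar mu g a x N (y' i))"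
    unfolding kernel_phase_def by (simp add: sum_subtractf sum_distrib_left right_diff_distrib sum_negf)
  finally show ?thesis unfolding a_def .
qed

lemma Sigma_op_kernelK_in_x:
  assumes "hbar \<noteq> 0"
  shows "Sigma_op hbar mu g N k 1 (\<lambda>x'. kernelK hbar mu g N l x' y) x
    = kernelK hbar mu g N l x y * ((\<i> * complex_of_real mu * complex_of_real g / 2) ^ k * complex_of_real
        (sum_principal_minors N k (lax_matrix {1..N} {1..N - l} (real l) (\<lambda>i. exp (mu * x i)) (\<lambda>r. exp (mu * y r)))))"
  using Sigma_op_exp_kernel_phase[where s = 1 and a = "- (mu * g * real l / (2 * hbar))" and c = "real l"
      and C = "mu * g * real l / (2 * hbar) * (\<Sum>n=1..N-l. y n)" and f = "\<lambda>x'. kernelK hbar mu g N l x' y"]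
  by (simp add: assms kernelK_eq_exp_kernel_phase_x)

lemma Sigma_op_kernelK_in_y:
  assumes "hbar \<noteq> 0"
  shows "Sigma_op hbar mu g (N - l) k (-1) (\<lambda>y'. kernelK hbar mu g N l x y') y
    = kernelK hbar mu g N l x y * ((\<i> * complex_of_real mu * complex_of_real g / 2) ^ k * complex_of_real
        (sum_principal_minors (N - l) k (lax_matrix {1..N - l} {1..N} (real l) (\<lambda>i. 1 / exp (mu * y i)) (\<lambda>r. 1 / exp (mu * x r)))))"
proof -
  have "exp (- 1 * mu * t) = 1 / exp (mu * t)" for t by (simp add: exp_minus inverse_eq_divide)
  then show ?thesis
    using Sigma_op_exp_kernel_phase[where s = "-1" and a = "mu * g * real l / (2 * hbar)" and c = "real l"
      and C = "- (mu * g * real l / (2 * hbar) * (\<Sum>m=1..N. x m))" and f = "\<lambda>y'. kernelK hbar mu g N l x y'"]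
    by (simp add: assms kernelK_eq_exp_kernel_phase_y)
qed

lemma inj_on_exp_scaled:
  fixes mu :: real
  assumes "mu \<noteq> 0" "inj_on x A"
  shows "inj_on (\<lambda>i. exp (mu * x i)) A"
  using assms by (auto simp: inj_on_def)

theorem theorem4p1:
  fixes hbar mu g :: real and N l k :: nat and x y :: "nat \<Rightarrow> real"
  assumes "hbar > 0" "mu > 0" "g > 0"
    and "l \<le> N" "1 \<le> k" "k \<le> N"
    and "inj_on x {1..N}" "inj_on y {1..N-l}"
  shows "Sigma_op hbar mu g N k 1 (\<lambda>x'. kernelK hbar mu g N l x' y) x =
         (\<Sum>j=0..min k l. coef_c mu g l j *
            Sigma_op hbar mu g (N - l) (k - j) (-1) (\<lambda>y'. kernelK hbar mu g N l x y') y)"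
proof -
  have hbar: "hbar \<noteq> 0" using assms(1) by simp
  define a where "a = \<i> * complex_of_real mu * complex_of_real g / 2"
  define K where "K = kernelK hbar mu g N l x y"
  define ey where "ey j = sum_principal_minors (N - l) (k - j)
      (lax_matrix {1..N - l} {1..N} (real l) (\<lambda>i. 1 / exp (mu * y i)) (\<lambda>r. 1 / exp (mu * x r)))" for j
  have "sum_principal_minors N k (lax_matrix {1..N} {1..N - l} (real (N - (N - l))) (\<lambda>i. exp (mu * x i)) (\<lambda>r. exp (mu * y r)))
      = (\<Sum>j=0..min k (N - (N - l)). real (esym_odd (N - (N - l)) j) * sum_principal_minors (N - l) (k - j)
          (lax_matrix {1..N - l} {1..N} (real (N - (N - l))) (\<lambda>i. 1 / exp (mu * y i)) (\<lambda>r. 1 / exp (mu * x r))))"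
    using assms(2,7,8) by (intro sum_principal_minors_lax_duality inj_on_exp_scaled) auto
  moreover have "N - (N - l) = l" using assms(4) by simp
  ultimately have duality: "sum_principal_minors N k (lax_matrix {1..N} {1..N - l} (real l) (\<lambda>i. exp (mu * x i)) (\<lambda>r. exp (mu * y r)))
      = (\<Sum>j=0..min k l. real (esym_odd l j) * ey j)"
    unfolding ey_def by simp
  have coef: "coef_c mu g l j * a ^ (k - j) = a ^ k * of_nat (esym_odd l j)" if "j \<le> k" for j
    using that unfolding coef_c_def esym_odd_def a_def by (simp add: power_add[symmetric])
  have "Sigma_op hbar mu g N k 1 (\<lambda>x'. kernelK hbar mu g N l x' y) x
      = K * (a ^ k * complex_of_real (\<Sum>j=0..min k l. real (esym_odd l j) * ey j))"
    unfolding Sigma_op_kernelK_in_x[OF hbar] duality a_def K_def ..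
  also have "\<dots> = (\<Sum>j=0..min k l. coef_c mu g l j * (K * (a ^ (k - j) * complex_of_real (ey j))))"
    unfolding of_real_sum sum_distrib_left by (intro sum.cong refl) (simp add: coef mult_ac)
  also have "\<dots> = (\<Sum>j=0..min k l. coef_c mu g l j *
      Sigma_op hbar mu g (N - l) (k - j) (-1) (\<lambda>y'. kernelK hbar mu g N l x y') y)"
    unfolding Sigma_op_kernelK_in_y[OF hbar] ey_def K_def a_def ..
  finally show ?thesis .
qed

end
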